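(* For every $p\ge0$ and every $n\ge2$, there exists a $\Sigma^0_p$ equivalence relation on $\omega$ which is complete under $n$-ary reducibility $\leq_c^n$ among $\Sigma^0_p$ equivalence relations, but fails to be complete among them under $\leq_c^{n+1}$. Likewise, there exists a $\Pi^0_p$ equivalence relation on $\omega$ which is complete under $\leq_c^n$ among $\Pi^0_p$ equivalence relations, but not under $\leq_c^{n+1}$.
   Context: For equivalence relations $E,F$ on $\omega$ and $n\ge1$, $F\leq_c^nE$ means there is a total computable function mapping each $(x_0,\dots,x_{n-1})\in\omega^n$ to $(y_0,\dots,y_{n-1})\in\omega^n$ with $x_i\,F\,x_j\iff y_i\,E\,y_j$ for all $i<j<n$. A $\Sigma^0_p$ (resp. $\Pi^0_p$) equivalence relation is an equivalence relation on $\omega$ that is a $\Sigma^0_p$ (resp. $\Pi^0_p$) subset of $\omega\times\omega$; $\Sigma^0_0=\Pi^0_0$ means computable. $E$ is complete under $\leq_c^n$ among a class if it belongs to the class and every member $F$ of the class satisfies $F\leq_c^nE$. *)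

theory Defs
  imports Main "HOL-Library.Nat_Bijection"
begin

text \<open>recfn k f: f, restricted to argument lists of length k, is a total
(general) recursive function of arity k.  Built from zero, successor,
projections by composition, primitive recursion and regular (total)
minimisation; by Kleene's normal form this is exactly the class of total
computable functions.\<close>

inductive recfn :: "nat \<Rightarrow> (nat list \<Rightarrow> nat) \<Rightarrow> bool" where
  rf_zero: "recfn k (\<lambda>xs. 0)"
| rf_succ: "recfn 1 (\<lambda>xs. Suc (hd xs))"
| rf_proj: "i < k \<Longrightarrow> recfn k (\<lambda>xs. xs ! i)"
| rf_comp: "recfn m f \<Longrightarrow> (\<forall>i<m. recfn k (gs i))
     \<Longrightarrow> recfn k (\<lambda>xs. f (map (\<lambda>i. gs i xs) [0..<m]))"
| rf_prim: "recfn k f \<Longrightarrow> recfn (k + 2) g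
     \<Longrightarrow> recfn (k + 1) (\<lambda>xs. rec_nat (f (tl xs)) (\<lambda>y r. g (y # r # tl xs)) (hd xs))"
| rf_mu: "recfn (k + 1) f \<Longrightarrow> (\<forall>xs. length xs = k \<longrightarrow> (\<exists>y. f (y # xs) = 0))
     \<Longrightarrow> recfn k (\<lambda>xs. LEAST y. f (y # xs) = 0)"
| rf_ext: "recfn k f \<Longrightarrow> (\<forall>xs. length xs = k \<longrightarrow> g xs = f xs) \<Longrightarrow> recfn k g"

definition computable_set :: "nat set \<Rightarrow> bool" where
  "computable_set A \<longleftrightarrow> (\<exists>f. recfn 1 f \<and> (\<forall>x. x \<in> A \<longleftrightarrow> f [x] = 0))"

fun Sigma0 :: "nat \<Rightarrow> nat set \<Rightarrow> bool" where
  "Sigma0 0 A = computable_set A"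
| "Sigma0 (Suc p) A = (\<exists>B. Sigma0 p (- B) \<and> A = {x. \<exists>y. prod_encode (x, y) \<in> B})"

definition Pi0 :: "nat \<Rightarrow> nat set \<Rightarrow> bool" where
  "Pi0 p A \<longleftrightarrow> Sigma0 p (- A)"

definition Sigma_eqrel :: "nat \<Rightarrow> (nat \<times> nat) set \<Rightarrow> bool" where
  "Sigma_eqrel p E \<longleftrightarrow> equiv UNIV E \<and> Sigma0 p (prod_encode ` E)"

definition Pi_eqrel :: "nat \<Rightarrow> (nat \<times> nat) set \<Rightarrow> bool" where
  "Pi_eqrel p E \<longleftrightarrow> equiv UNIV E \<and> Pi0 p (prod_encode ` E)"

definition nary_reducible :: "nat \<Rightarrow> (nat \<times> nat) set \<Rightarrow> (nat \<times> nat) set \<Rightarrow> bool" where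
  "nary_reducible n F E \<longleftrightarrow>
     (\<exists>g :: nat \<Rightarrow> nat list \<Rightarrow> nat. (\<forall>i<n. recfn n (g i)) \<and>
        (\<forall>xs. length xs = n \<longrightarrow>
           (\<forall>i j. i < j \<and> j < n \<longrightarrow> ((xs ! i, xs ! j) \<in> F \<longleftrightarrow> (g i xs, g j xs) \<in> E))))"

definition complete_under :: "nat \<Rightarrow> ((nat \<times> nat) set \<Rightarrow> bool) \<Rightarrow> (nat \<times> nat) set \<Rightarrow> bool" where
  "complete_under n C E \<longleftrightarrow> C E \<and> (\<forall>F. C F \<longrightarrow> nary_reducible n F E)"

end

theory Submission
  imports Defs
begin

text \<open>
For \<open>p = 0\<close> the relation with exactly \<open>n\<close> classes \<open>{0}, \<dots>, {n-2}, {n-1, n, \<dots>}\<close> works: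
an \<open>n\<close>-tuple is reduced by sending each entry to the least index of an equivalent entry,
while the identity relation is not \<open>(n+1)\<close>-reducible to it by pigeonhole.

For \<open>p > 0\<close> fix a universal \<open>\<Sigma>\<^sup>0\<^sub>p\<close> (resp. \<open>\<Pi>\<^sup>0\<^sub>p\<close>) set \<open>W\<close>. A number \<open>c\<close> codes, via
\<open>W\<close>, a graph on \<open>{0..<n}\<close>, and \<open>(c, i)\<close> is related to \<open>(c, j)\<close> if \<open>i\<close> and \<open>j\<close> are connected
in it. Every relation of the class is \<open>n\<close>-reducible to this one: code the \<open>n\<close> inputs
together with an index of the relation into \<open>c\<close>. Every nontrivial class has at most \<open>n\<close>
elements, and this defeats a would-be \<open>(n+1)\<close>-ary reduction \<open>g\<close>: by Kleene's normal
form the graphs of its components have \<open>\<Sigma>\<^sup>0\<^sub>1\<close> indices, and a column \<open>e\<close> coding these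
indices is made a single class of size \<open>n + 1\<close> exactly when \<open>g\<close> maps
\<open>(e,0), \<dots>, (e,n)\<close> to pairwise distinct values (a \<open>\<Sigma>\<^sup>0\<^sub>1\<close> condition; for the
\<open>\<Pi>\<^sup>0\<^sub>p\<close> case the complementary \<open>\<Pi>\<^sup>0\<^sub>1\<close> one). Either way \<open>g\<close> gives the wrong answer.
\<close>

section \<open>Closure properties of total recursive functions\<close>

lemma length_eq_1E: "length xs = 1 \<Longrightarrow> (\<And>a. xs = [a] \<Longrightarrow> P) \<Longrightarrow> P"
  by (cases xs) auto

lemma length_eq_2E: "length xs = 2 \<Longrightarrow> (\<And>a b. xs = [a, b] \<Longrightarrow> P) \<Longrightarrow> P"
  by (cases xs; cases "tl xs") auto

lemma recfn_comp1: "recfn 1 h \<Longrightarrow> recfn k f \<Longrightarrow> recfn k (\<lambda>xs. h [f xs])"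
  using rf_comp[of 1 h k "\<lambda>_. f"] by simp

lemma recfn_comp2: "recfn 2 h \<Longrightarrow> recfn k f \<Longrightarrow> recfn k g \<Longrightarrow> recfn k (\<lambda>xs. h [f xs, g xs])"
  using rf_comp[of 2 h k "\<lambda>i. if i = 0 then f else g"] by (simp add: upt_rec)

lemma recfn_cong: "recfn k f \<Longrightarrow> (\<And>xs. length xs = k \<Longrightarrow> g xs = f xs) \<Longrightarrow> recfn k g"
  using rf_ext by blast

lemma recfn_const: "recfn k (\<lambda>xs. c)"
proof (induction c)
  case 0
  show ?case by (rule rf_zero)
next
  case (Suc c)
  show ?case using recfn_comp1[OF rf_succ Suc] by simp
qed

lemma recfn_prim_1: "recfn 0 f \<Longrightarrow> recfn 2 g \<Longrightarrow>
    recfn 1 (\<lambda>xs. rec_nat (f (tl xs)) (\<lambda>y r. g (y # r # tl xs)) (hd xs))"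
  using rf_prim[of 0 f g] by (simp add: numeral_eq_Suc)

lemma recfn_prim_2: "recfn 1 f \<Longrightarrow> recfn 3 g \<Longrightarrow>
    recfn 2 (\<lambda>xs. rec_nat (f (tl xs)) (\<lambda>y r. g (y # r # tl xs)) (hd xs))"
  using rf_prim[of 1 f g] by (simp add: numeral_eq_Suc)

definition rec_fun :: "(nat \<Rightarrow> nat) \<Rightarrow> bool" where
  "rec_fun f \<longleftrightarrow> recfn 1 (\<lambda>xs. f (hd xs))"

definition rec_fun2 :: "(nat \<Rightarrow> nat \<Rightarrow> nat) \<Rightarrow> bool" where
  "rec_fun2 f \<longleftrightarrow> recfn 2 (\<lambda>xs. f (xs ! 0) (xs ! 1))"

definition rec_pred :: "(nat \<Rightarrow> bool) \<Rightarrow> bool" where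
  "rec_pred P \<longleftrightarrow> rec_fun (\<lambda>x. if P x then 1 else 0)"

lemma rec_funD: "rec_fun f \<Longrightarrow> recfn 1 (\<lambda>xs. f (xs ! 0))"
  unfolding rec_fun_def by (erule recfn_cong) (erule length_eq_1E, simp)

lemma rec_fun_recfn1: "recfn 1 f \<Longrightarrow> rec_fun (\<lambda>x. f [x])"
  unfolding rec_fun_def by (erule recfn_cong) (erule length_eq_1E, simp)

lemma rec_fun_cong: "rec_fun f \<Longrightarrow> (\<And>x. g x = f x) \<Longrightarrow> rec_fun g"
  by (metis ext)

lemma rec_fun_id: "rec_fun (\<lambda>x. x)"
  unfolding rec_fun_def by (rule recfn_cong[OF rf_proj[of 0 1]]) (simp, erule length_eq_1E, simp)

lemma rec_fun_const: "rec_fun (\<lambda>x. c)"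
  unfolding rec_fun_def by (rule recfn_const)

lemma rec_fun_Suc: "rec_fun f \<Longrightarrow> rec_fun (\<lambda>x. Suc (f x))"
  unfolding rec_fun_def by (drule recfn_comp1[OF rf_succ]) simp

lemma rec_fun_comp: "rec_fun f \<Longrightarrow> rec_fun g \<Longrightarrow> rec_fun (\<lambda>x. f (g x))"
  unfolding rec_fun_def by (drule recfn_comp1, assumption) simp

lemma rec_fun_comp2: "rec_fun2 h \<Longrightarrow> rec_fun f \<Longrightarrow> rec_fun g \<Longrightarrow> rec_fun (\<lambda>x. h (f x) (g x))"
  unfolding rec_fun_def rec_fun2_def by (drule recfn_comp2, assumption, assumption) simp

lemma recfn_comp_rec_fun: "rec_fun h \<Longrightarrow> recfn k f \<Longrightarrow> recfn k (\<lambda>xs. h (f xs))"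
  unfolding rec_fun_def by (drule recfn_comp1, assumption) simp

lemma recfn_comp_rec_fun2:
  "rec_fun2 h \<Longrightarrow> recfn k f \<Longrightarrow> recfn k g \<Longrightarrow> recfn k (\<lambda>xs. h (f xs) (g xs))"
  unfolding rec_fun2_def by (drule recfn_comp2, assumption, assumption) simp

lemma rec_fun2_swap: "rec_fun2 h \<Longrightarrow> rec_fun2 (\<lambda>a b. h b a)"
  unfolding rec_fun2_def
  by (rule recfn_cong[OF recfn_comp2[OF _ rf_proj[of 1 2] rf_proj[of 0 2]]]) auto

lemma rec_fun_pred: "rec_fun (\<lambda>x. x - 1)"
proof -
  have "recfn 1 (\<lambda>xs. rec_nat 0 (\<lambda>y r. (y # r # tl xs) ! 0) (hd xs))"
    using recfn_prim_1[OF rf_zero rf_proj[of 0 2]] by simp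
  moreover have "rec_nat 0 (\<lambda>y r. y) n = n - 1" for n :: nat
    by (cases n) auto
  ultimately show ?thesis
    unfolding rec_fun_def by simp
qed

lemma rec_nat_Suc_eq_add: "rec_nat b (\<lambda>y r. Suc r) a = a + (b :: nat)"
  by (induction a) auto

lemma rec_nat_pred_eq_diff: "rec_nat b (\<lambda>y r. r - Suc 0) a = b - (a :: nat)"
  by (induction a) auto

lemma rec_nat_add_eq_mult: "rec_nat 0 (\<lambda>y r. r + b) a = a * (b :: nat)"
  by (induction a) auto

lemma rec_fun2_add: "rec_fun2 (+)"
proof -
  have "recfn 3 (\<lambda>zs. Suc (zs ! 1))"
    using recfn_comp1[OF rf_succ rf_proj[of 1 3]] by simp
  from recfn_prim_2[OF rf_proj[OF zero_less_one] this] show ?thesis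
    unfolding rec_fun2_def by (rule recfn_cong) (erule length_eq_2E, simp add: rec_nat_Suc_eq_add)
qed

lemma rec_fun2_diff: "rec_fun2 (-)"
proof -
  have "recfn 3 (\<lambda>zs. zs ! 1 - 1)"
    using recfn_comp_rec_fun[OF rec_fun_pred rf_proj[of 1 3]] by simp
  from recfn_prim_2[OF rf_proj[OF zero_less_one] this] have "rec_fun2 (\<lambda>a b. b - a)"
    unfolding rec_fun2_def by (rule recfn_cong) (erule length_eq_2E, simp add: rec_nat_pred_eq_diff)
  then show ?thesis
    using rec_fun2_swap by fastforce
qed

lemma rec_fun2_mult: "rec_fun2 (*)"
proof -
  have "recfn 3 (\<lambda>zs. zs ! 1 + zs ! 2)"
    using recfn_comp_rec_fun2[OF rec_fun2_add rf_proj[of 1 3] rf_proj[of 2 3]] by simp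
  from recfn_prim_2[OF rf_zero this] show ?thesis
    unfolding rec_fun2_def by (rule recfn_cong) (erule length_eq_2E, simp add: rec_nat_add_eq_mult)
qed

lemma rec_fun_add: "rec_fun f \<Longrightarrow> rec_fun g \<Longrightarrow> rec_fun (\<lambda>x. f x + g x)"
  using rec_fun_comp2[OF rec_fun2_add] .

lemma rec_fun_diff: "rec_fun f \<Longrightarrow> rec_fun g \<Longrightarrow> rec_fun (\<lambda>x. f x - g x)"
  using rec_fun_comp2[OF rec_fun2_diff] .

lemma rec_fun_mult: "rec_fun f \<Longrightarrow> rec_fun g \<Longrightarrow> rec_fun (\<lambda>x. f x * g x)"
  using rec_fun_comp2[OF rec_fun2_mult] .

lemma rec_nat_triangle: "rec_nat 0 (\<lambda>y r. Suc (r + y)) n = triangle n"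
  by (induction n) auto

lemma rec_fun_triangle: "rec_fun triangle"
proof -
  have "recfn 2 (\<lambda>zs. zs ! 1 + Suc (zs ! 0))"
    using recfn_comp_rec_fun2[OF rec_fun2_add rf_proj[of 1 2] recfn_comp1[OF rf_succ rf_proj[of 0 2]]]
    by simp
  from recfn_prim_1[OF rf_zero this] show ?thesis
    unfolding rec_fun_def by (simp add: rec_nat_triangle)
qed

lemma rec_fun2_prod_encode: "rec_fun2 (\<lambda>a b. prod_encode (a, b))"
proof -
  have "recfn 2 (\<lambda>xs. triangle (xs ! 0 + xs ! 1) + xs ! 0)"
    by (rule recfn_comp_rec_fun2[OF rec_fun2_add recfn_comp_rec_fun[OF rec_fun_triangle
          recfn_comp_rec_fun2[OF rec_fun2_add rf_proj rf_proj]] rf_proj]) auto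
  then show ?thesis
    unfolding rec_fun2_def by (simp add: prod_encode_def)
qed

lemma rec_fun_prod_encode: "rec_fun f \<Longrightarrow> rec_fun g \<Longrightarrow> rec_fun (\<lambda>x. prod_encode (f x, g x))"
  using rec_fun_comp2[OF rec_fun2_prod_encode] .

lemma rec_fun_Least2:
  assumes f: "rec_fun2 f" and ex: "\<And>x. \<exists>y. f y x = 0"
  shows "rec_fun (\<lambda>x. LEAST y. f y x = 0)"
proof -
  have "recfn (1 + 1) (\<lambda>zs. f (zs ! 0) (zs ! 1))"
    using f unfolding rec_fun2_def by (simp add: numeral_2_eq_2)
  moreover have "\<forall>xs. length xs = 1 \<longrightarrow> (\<exists>y. f ((y # xs) ! 0) ((y # xs) ! 1) = 0)"
    using ex by (auto elim: length_eq_1E)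
  ultimately have "recfn 1 (\<lambda>xs. LEAST y. f ((y # xs) ! 0) ((y # xs) ! 1) = 0)"
    by (rule rf_mu)
  then show ?thesis
    unfolding rec_fun_def by (rule recfn_cong) (erule length_eq_1E, simp)
qed

definition pfst :: "nat \<Rightarrow> nat" where
  "pfst z = fst (prod_decode z)"

definition psnd :: "nat \<Rightarrow> nat" where
  "psnd z = snd (prod_decode z)"

lemma pfst_prod_encode [simp]: "pfst (prod_encode (a, b)) = a"
  by (simp add: pfst_def)

lemma psnd_prod_encode [simp]: "psnd (prod_encode (a, b)) = b"
  by (simp add: psnd_def)

lemma prod_encode_pfst_psnd [simp]: "prod_encode (pfst z, psnd z) = z"
  by (simp add: pfst_def psnd_def)

lemma prod_encode_image: "prod_encode ` R = {z. (pfst z, psnd z) \<in> R}"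
  by (auto simp: image_iff) (metis prod_encode_pfst_psnd)

lemma triangle_mono: "a \<le> b \<Longrightarrow> triangle a \<le> triangle b"
  by (induction b) (auto simp: le_Suc_eq)

lemma le_triangle: "n \<le> triangle n"
  by (induction n) auto

lemma prod_encode_ge_fst: "a \<le> prod_encode (a, b)"
  by (simp add: prod_encode_def)

lemma prod_encode_ge_snd: "b \<le> prod_encode (a, b)"
  using le_triangle[of "a + b"] by (simp add: prod_encode_def)

lemma prod_encode_less_fst: "a < a' \<Longrightarrow> prod_encode (a, b) < prod_encode (a', b)"
  using triangle_mono[of "a + b" "a' + b"] by (simp add: prod_encode_def)

lemma pfst_le: "pfst z \<le> z"
  using prod_encode_ge_fst[of "pfst z" "psnd z"] by simp

lemma psnd_le: "psnd z \<le> z"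
  using prod_encode_ge_snd[of "psnd z" "pfst z"] by simp

lemma psnd_less: "pfst z \<noteq> 0 \<Longrightarrow> psnd z < z"
  using le_triangle[of "pfst z + psnd z"] prod_encode_pfst_psnd[of z]
  unfolding prod_encode_def by simp

text \<open>\<open>pair_sum z\<close> is the index of the Cantor diagonal containing \<open>z\<close>; it is found by
search, and \<open>pfst\<close> and \<open>psnd\<close> are then obtained by subtraction, hence are recursive.\<close>

definition pair_sum :: "nat \<Rightarrow> nat" where
  "pair_sum z = (LEAST s. z < triangle (Suc s))"

lemma pair_sum_prod_encode: "pair_sum (prod_encode (a, b)) = a + b"
proof -
  have "(LEAST s. triangle (a + b) + a < triangle (Suc s)) = a + b"
  proof (rule Least_equality)
    fix s
    assume less: "triangle (a + b) + a < triangle (Suc s)"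
    show "a + b \<le> s"
    proof (rule ccontr)
      assume "\<not> a + b \<le> s"
      then have "triangle (Suc s) \<le> triangle (a + b)"
        by (intro triangle_mono) simp
      with less show False by simp
    qed
  qed simp
  then show ?thesis
    by (simp add: pair_sum_def prod_encode_def)
qed

lemma pair_sum_eq: "pair_sum z = pfst z + psnd z"
  using pair_sum_prod_encode[of "pfst z" "psnd z"] by simp

lemma rec_fun_pair_sum: "rec_fun pair_sum"
proof -
  have "rec_fun2 (\<lambda>y x. 1 - (triangle (Suc y) - x))"
    unfolding rec_fun2_def
    by (rule recfn_comp_rec_fun2[OF rec_fun2_diff recfn_const recfn_comp_rec_fun2[OF rec_fun2_diff
          recfn_comp_rec_fun[OF rec_fun_triangle] rf_proj]])
      (auto intro: recfn_comp1[OF rf_succ rf_proj, simplified])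
  moreover have "\<exists>y. 1 - (triangle (Suc y) - x) = 0" for x
    using le_triangle[of x] by (intro exI[of _ x]) simp
  ultimately have "rec_fun (\<lambda>x. LEAST y. 1 - (triangle (Suc y) - x) = 0)"
    by (rule rec_fun_Least2)
  then show ?thesis
    unfolding pair_sum_def by (rule rec_fun_cong) (rule arg_cong[where f = Least], auto)
qed

lemma rec_fun_pfst: "rec_fun f \<Longrightarrow> rec_fun (\<lambda>x. pfst (f x))"
proof -
  have "pfst z = z - triangle (pair_sum z)" for z
    using prod_encode_pfst_psnd[of z] pair_sum_eq[of z] unfolding prod_encode_def by simp
  then have "rec_fun pfst"
    by (intro rec_fun_cong[OF rec_fun_diff[OF rec_fun_id rec_fun_comp[OF rec_fun_triangle rec_fun_pair_sum]]])
  then show "rec_fun f \<Longrightarrow> rec_fun (\<lambda>x. pfst (f x))"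
    by (rule rec_fun_comp)
qed

lemma rec_fun_psnd: "rec_fun f \<Longrightarrow> rec_fun (\<lambda>x. psnd (f x))"
proof -
  have "rec_fun psnd"
    by (rule rec_fun_cong[OF rec_fun_diff[OF rec_fun_pair_sum rec_fun_pfst[OF rec_fun_id]]])
      (simp add: pair_sum_eq)
  then show "rec_fun f \<Longrightarrow> rec_fun (\<lambda>x. psnd (f x))"
    by (rule rec_fun_comp)
qed

text \<open>Functions of several arguments are handled as functions of a single, paired argument.\<close>

lemma rec_fun_rec_nat:
  assumes b: "rec_fun b" and N: "rec_fun N"
    and s: "rec_fun (\<lambda>w. s (pfst w) (pfst (psnd w)) (psnd (psnd w)))"
  shows "rec_fun (\<lambda>x. rec_nat (b x) (\<lambda>n acc. s x n acc) (N x))"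
proof -
  let ?s = "\<lambda>zs. s (zs ! 2) (zs ! 0) (zs ! 1)"
  have "recfn 3 ?s"
    using recfn_comp_rec_fun[OF s recfn_comp_rec_fun2[OF rec_fun2_prod_encode rf_proj[of 2 3]
        recfn_comp_rec_fun2[OF rec_fun2_prod_encode rf_proj[of 0 3] rf_proj[of 1 3]]]] by simp
  from recfn_prim_2[OF rec_funD[OF b] this]
  have "recfn 2 (\<lambda>xs. rec_nat (b (tl xs ! 0)) (\<lambda>y r. ?s (y # r # tl xs)) (hd xs))" .
  from recfn_comp2[OF this N[unfolded rec_fun_def] rec_fun_id[unfolded rec_fun_def]]
  show ?thesis
    unfolding rec_fun_def by simp
qed

lemma rec_fun_Least:
  assumes f: "rec_fun (\<lambda>w. f (pfst w) (psnd w))" and ex: "\<And>x. \<exists>y. f x y = 0"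
  shows "rec_fun (\<lambda>x. LEAST y. f x y = 0)"
proof -
  have "rec_fun2 (\<lambda>y x. f x y)"
    using recfn_comp_rec_fun[OF f recfn_comp_rec_fun2[OF rec_fun2_prod_encode rf_proj[of 1 2] rf_proj[of 0 2]]]
    unfolding rec_fun2_def by simp
  then show ?thesis
    using rec_fun_Least2[of "\<lambda>y x. f x y"] ex by simp
qed

lemma funpow_eq_rec_nat: "(f ^^ n) a = rec_nat a (\<lambda>_ r. f r) n"
  by (induction n) auto

lemma rec_fun_funpow:
  assumes "rec_fun (\<lambda>w. st (pfst w) (psnd w))" "rec_fun N" "rec_fun b"
  shows "rec_fun (\<lambda>x. (st x ^^ N x) (b x))"
proof -
  have "rec_fun (\<lambda>w. st (pfst w) (psnd (psnd w)))"
    using rec_fun_comp[OF assms(1) rec_fun_prod_encode[OF rec_fun_pfst rec_fun_psnd[OF rec_fun_psnd]]]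
    by (simp add: rec_fun_id)
  then have "rec_fun (\<lambda>x. rec_nat (b x) (\<lambda>n acc. st x acc) (N x))"
    by (rule rec_fun_rec_nat[OF assms(3,2)])
  then show ?thesis
    by (simp add: funpow_eq_rec_nat)
qed

lemma rec_fun_If:
  assumes P: "rec_pred P" and f: "rec_fun f" and g: "rec_fun g"
  shows "rec_fun (\<lambda>x. if P x then f x else g x)"
proof -
  let ?c = "\<lambda>x. if P x then 1 else 0 :: nat"
  have c: "rec_fun ?c"
    using P unfolding rec_pred_def .
  show ?thesis
    by (rule rec_fun_cong[OF rec_fun_add[OF rec_fun_mult[OF c f] rec_fun_mult[OF rec_fun_diff[OF rec_fun_const[of 1] c] g]]])
      simp
qed

lemma rec_pred_comp: "rec_pred P \<Longrightarrow> rec_fun h \<Longrightarrow> rec_pred (\<lambda>x. P (h x))"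
  unfolding rec_pred_def using rec_fun_comp by blast

lemma rec_pred_eq:
  assumes f: "rec_fun f" and g: "rec_fun g"
  shows "rec_pred (\<lambda>x. f x = g x)"
  unfolding rec_pred_def
  by (rule rec_fun_cong[OF rec_fun_diff[OF rec_fun_const[of 1] rec_fun_add[OF rec_fun_diff[OF f g] rec_fun_diff[OF g f]]]])
    auto

lemma rec_pred_less:
  assumes f: "rec_fun f" and g: "rec_fun g"
  shows "rec_pred (\<lambda>x. f x < g x)"
  unfolding rec_pred_def
  by (rule rec_fun_cong[OF rec_fun_diff[OF rec_fun_const[of 1] rec_fun_diff[OF rec_fun_const[of 1] rec_fun_diff[OF g f]]]])
    auto

lemma rec_pred_le: "rec_fun f \<Longrightarrow> rec_fun g \<Longrightarrow> rec_pred (\<lambda>x. f x \<le> g x)"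
  using rec_pred_less[OF _ rec_fun_Suc, of f g] by (simp add: less_Suc_eq_le)

lemma rec_pred_not: "rec_pred P \<Longrightarrow> rec_pred (\<lambda>x. \<not> P x)"
  unfolding rec_pred_def by (rule rec_fun_cong[OF rec_fun_diff[OF rec_fun_const[of 1]]]) auto

lemma rec_pred_conj:
  assumes "rec_pred P" "rec_pred Q"
  shows "rec_pred (\<lambda>x. P x \<and> Q x)"
  using assms unfolding rec_pred_def by (rule rec_fun_cong[OF rec_fun_mult]) auto

lemma rec_pred_disj: "rec_pred P \<Longrightarrow> rec_pred Q \<Longrightarrow> rec_pred (\<lambda>x. P x \<or> Q x)"
proof -
  assume "rec_pred P" "rec_pred Q"
  then have "rec_pred (\<lambda>x. \<not> (\<not> P x \<and> \<not> Q x))"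
    by (intro rec_pred_not rec_pred_conj)
  then show ?thesis by simp
qed

lemma rec_pred_imp: "rec_pred P \<Longrightarrow> rec_pred Q \<Longrightarrow> rec_pred (\<lambda>x. P x \<longrightarrow> Q x)"
proof -
  assume "rec_pred P" "rec_pred Q"
  then have "rec_pred (\<lambda>x. \<not> P x \<or> Q x)"
    by (intro rec_pred_disj rec_pred_not)
  then show ?thesis by simp
qed

lemma rec_pred_const: "rec_pred (\<lambda>x. P)"
  unfolding rec_pred_def by (cases P) (auto intro: rec_fun_const)

definition count_less :: "(nat \<Rightarrow> nat \<Rightarrow> bool) \<Rightarrow> nat \<Rightarrow> nat \<Rightarrow> nat" where
  "count_less P x n = rec_nat 0 (\<lambda>y acc. acc + (if P x y then 1 else 0)) n"

lemma count_less_pos_iff: "0 < count_less P x n \<longleftrightarrow> (\<exists>y<n. P x y)"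
  by (induction n) (auto simp: count_less_def less_Suc_eq)

lemma rec_pred_ex_less:
  assumes P: "rec_pred (\<lambda>w. P (pfst w) (psnd w))" and B: "rec_fun B"
  shows "rec_pred (\<lambda>x. \<exists>y<B x. P x y)"
proof -
  have "rec_fun (\<lambda>w. if P (pfst w) (pfst (psnd w)) then 1 else 0)"
    using rec_fun_comp[OF P[unfolded rec_pred_def] rec_fun_prod_encode[OF rec_fun_pfst rec_fun_pfst[OF rec_fun_psnd]]]
    by (simp add: rec_fun_id)
  then have "rec_fun (\<lambda>w. psnd (psnd w) + (if P (pfst w) (pfst (psnd w)) then 1 else 0))"
    by (rule rec_fun_add[OF rec_fun_psnd[OF rec_fun_psnd[OF rec_fun_id]]])
  then have "rec_fun (\<lambda>x. count_less P x (B x))"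
    unfolding count_less_def by (rule rec_fun_rec_nat[OF rec_fun_const B])
  then have "rec_pred (\<lambda>x. 0 < count_less P x (B x))"
    by (intro rec_pred_less rec_fun_const)
  then show ?thesis
    by (simp add: count_less_pos_iff)
qed

lemma rec_pred_all_less:
  assumes "rec_pred (\<lambda>w. P (pfst w) (psnd w))" and "rec_fun B"
  shows "rec_pred (\<lambda>x. \<forall>y<B x. P x y)"
proof -
  have "rec_pred (\<lambda>x. \<not> (\<exists>y<B x. \<not> P x y))"
    by (intro rec_pred_not rec_pred_ex_less[OF _ assms(2)] rec_pred_not assms(1))
  then show ?thesis by simp
qed

lemma rec_pred_ex_le:
  assumes "rec_pred (\<lambda>w. P (pfst w) (psnd w))" and "rec_fun B"
  shows "rec_pred (\<lambda>x. \<exists>y\<le>B x. P x y)"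
  using rec_pred_ex_less[OF assms(1) rec_fun_Suc[OF assms(2)]] by (simp add: less_Suc_eq_le)

lemma rec_pred_all_le:
  assumes "rec_pred (\<lambda>w. P (pfst w) (psnd w))" and "rec_fun B"
  shows "rec_pred (\<lambda>x. \<forall>y\<le>B x. P x y)"
  using rec_pred_all_less[OF assms(1) rec_fun_Suc[OF assms(2)]] by (simp add: less_Suc_eq_le)

definition code_Cons :: "nat \<Rightarrow> nat \<Rightarrow> nat" where
  "code_Cons x xs = Suc (prod_encode (x, xs))"

definition code_hd :: "nat \<Rightarrow> nat" where
  "code_hd X = pfst (X - 1)"

definition code_tl :: "nat \<Rightarrow> nat" where
  "code_tl X = psnd (X - 1)"

definition code_nth :: "nat \<Rightarrow> nat \<Rightarrow> nat" where
  "code_nth X i = code_hd ((code_tl ^^ i) X)"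

definition code_length :: "nat \<Rightarrow> nat" where
  "code_length X = (LEAST n. (code_tl ^^ n) X = 0)"

definition code_mem :: "nat \<Rightarrow> nat \<Rightarrow> bool" where
  "code_mem q L \<longleftrightarrow> (\<exists>i<code_length L. code_nth L i = q)"

primrec list_code :: "nat list \<Rightarrow> nat" where
  "list_code [] = 0"
| "list_code (x # xs) = code_Cons x (list_code xs)"

lemma code_hd_Cons [simp]: "code_hd (code_Cons x xs) = x"
  by (simp add: code_hd_def code_Cons_def)

lemma code_tl_Cons [simp]: "code_tl (code_Cons x xs) = xs"
  by (simp add: code_tl_def code_Cons_def)

lemma code_Cons_neq_0 [simp]: "code_Cons x xs \<noteq> 0"
  by (simp add: code_Cons_def)

lemma code_tl_0 [simp]: "code_tl 0 = 0"
  by (simp add: code_tl_def psnd_def prod_decode_def prod_decode_aux.simps)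

lemma code_Cons_hd_tl: "X \<noteq> 0 \<Longrightarrow> code_Cons (code_hd X) (code_tl X) = X"
  by (simp add: code_Cons_def code_hd_def code_tl_def)

lemma code_tl_less: "X \<noteq> 0 \<Longrightarrow> code_tl X < X"
  using prod_encode_ge_snd[of "code_tl X" "code_hd X"] code_Cons_hd_tl[of X]
  unfolding code_Cons_def by simp

lemma list_code_surj: "\<exists>xs. X = list_code xs"
proof (induction X rule: less_induct)
  case (less X)
  show ?case
  proof (cases "X = 0")
    case True
    then show ?thesis by (intro exI[of _ "[]"]) simp
  next
    case False
    then obtain ys where "code_tl X = list_code ys"
      using less code_tl_less by blast
    then have "X = list_code (code_hd X # ys)"
      using code_Cons_hd_tl[OF False] by simp
    then show ?thesis ..
  qed
qed

lemma code_tl_list_code [simp]: "code_tl (list_code xs) = list_code (tl xs)"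
  by (cases xs) auto

lemma code_tl_funpow_list_code: "(code_tl ^^ i) (list_code xs) = list_code (drop i xs)"
  by (induction i) (auto simp: drop_Suc tl_drop)

lemma list_code_eq_0_iff: "list_code xs = 0 \<longleftrightarrow> xs = []"
  by (cases xs) auto

lemma code_nth_list_code [simp]: "i < length xs \<Longrightarrow> code_nth (list_code xs) i = xs ! i"
  unfolding code_nth_def code_tl_funpow_list_code by (simp add: Cons_nth_drop_Suc[symmetric])

lemma code_length_list_code [simp]: "code_length (list_code xs) = length xs"
  unfolding code_length_def code_tl_funpow_list_code list_code_eq_0_iff
  by (rule Least_equality) auto

lemma code_mem_list_code [simp]: "code_mem q (list_code xs) \<longleftrightarrow> q \<in> set xs"
  unfolding code_mem_def by (auto simp: in_set_conv_nth)

lemma list_code_greater: "q \<in> set xs \<Longrightarrow> q < list_code xs"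
proof (induction xs)
  case (Cons a xs)
  then show ?case
    using prod_encode_ge_fst[of a "list_code xs"] prod_encode_ge_snd[of "list_code xs" a]
    by (auto simp: code_Cons_def)
qed simp

lemma code_nth_less: "j < code_length X \<Longrightarrow> code_nth X j < X"
  using list_code_surj[of X] by (auto intro!: list_code_greater)

lemma rec_fun_code_Cons: "rec_fun f \<Longrightarrow> rec_fun g \<Longrightarrow> rec_fun (\<lambda>x. code_Cons (f x) (g x))"
  unfolding code_Cons_def by (intro rec_fun_Suc rec_fun_prod_encode)

lemma rec_fun_code_hd: "rec_fun f \<Longrightarrow> rec_fun (\<lambda>x. code_hd (f x))"
  unfolding code_hd_def by (intro rec_fun_pfst rec_fun_diff rec_fun_const)

lemma rec_fun_code_tl: "rec_fun f \<Longrightarrow> rec_fun (\<lambda>x. code_tl (f x))"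
  unfolding code_tl_def by (intro rec_fun_psnd rec_fun_diff rec_fun_const)

lemma rec_fun_code_nth: "rec_fun f \<Longrightarrow> rec_fun g \<Longrightarrow> rec_fun (\<lambda>x. code_nth (f x) (g x))"
  unfolding code_nth_def
  by (intro rec_fun_code_hd rec_fun_funpow[where st = "\<lambda>_. code_tl"] rec_fun_code_tl rec_fun_psnd rec_fun_id)

lemma rec_fun_code_length: "rec_fun f \<Longrightarrow> rec_fun (\<lambda>x. code_length (f x))"
proof -
  have "rec_fun (\<lambda>x. LEAST n. (if (code_tl ^^ n) x = 0 then 0 else 1) = (0::nat))"
  proof (rule rec_fun_Least)
    show "rec_fun (\<lambda>w. if (code_tl ^^ psnd w) (pfst w) = 0 then 0 else 1)"
      by (intro rec_fun_If rec_pred_eq rec_fun_funpow[where st = "\<lambda>_. code_tl"] rec_fun_code_tl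
          rec_fun_psnd rec_fun_pfst rec_fun_id rec_fun_const)
    fix x
    obtain xs where "x = list_code xs"
      using list_code_surj by blast
    then show "\<exists>y. (if (code_tl ^^ y) x = 0 then 0 else 1) = (0::nat)"
      by (intro exI[of _ "length xs"]) (simp add: code_tl_funpow_list_code)
  qed
  then have "rec_fun code_length"
    unfolding code_length_def by (rule rec_fun_cong) (rule arg_cong[where f = Least], auto)
  then show "rec_fun f \<Longrightarrow> rec_fun (\<lambda>x. code_length (f x))"
    by (rule rec_fun_comp)
qed

lemma rec_pred_code_mem:
  assumes f: "rec_fun f" and g: "rec_fun g"
  shows "rec_pred (\<lambda>x. code_mem (f x) (g x))"
proof -
  have "rec_fun (\<lambda>w. f (pfst w))" "rec_fun (\<lambda>w. g (pfst w))"
    by (simp_all add: rec_fun_comp[OF f rec_fun_pfst[OF rec_fun_id]] rec_fun_comp[OF g rec_fun_pfst[OF rec_fun_id]])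
  then show ?thesis
    unfolding code_mem_def
    by (intro rec_pred_ex_less rec_pred_eq rec_fun_code_nth rec_fun_code_length g rec_fun_psnd rec_fun_id)
qed

lemmas rec_fun_intros =
  rec_fun_id rec_fun_const rec_fun_Suc rec_fun_add rec_fun_diff rec_fun_mult rec_fun_prod_encode
  rec_fun_pfst rec_fun_psnd rec_fun_If rec_pred_eq rec_pred_less rec_pred_le rec_pred_not
  rec_pred_conj rec_pred_disj rec_pred_imp rec_pred_const rec_pred_ex_less rec_pred_all_less
  rec_pred_ex_le rec_pred_all_le rec_fun_code_Cons rec_fun_code_hd rec_fun_code_tl rec_fun_code_nth
  rec_fun_code_length rec_pred_code_mem

lemma recfn_list_code: "recfn k list_code"
proof -
  have "recfn k (\<lambda>xs. list_code (drop j xs))" if "j \<le> k" for j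
    using that
  proof (induction "k - j" arbitrary: j)
    case 0
    then show ?case by (intro recfn_cong[OF recfn_const[of k 0]]) simp
  next
    case (Suc d)
    then have j: "j < k" and IH: "recfn k (\<lambda>xs. list_code (drop (Suc j) xs))"
      by auto
    from recfn_comp_rec_fun2[OF rec_fun2_prod_encode rf_proj[OF j] IH]
    have "recfn k (\<lambda>xs. Suc (prod_encode (xs ! j, list_code (drop (Suc j) xs))))"
      by (rule recfn_comp_rec_fun[OF rec_fun_Suc[OF rec_fun_id]])
    then show ?case
      by (rule recfn_cong) (simp add: Cons_nth_drop_Suc[symmetric] j code_Cons_def)
  qed
  from this[of 0] show ?thesis by simp
qed

section \<open>Kleene's normal form\<close>

text \<open>Programs are numbers whose \<open>pfst\<close> is an opcode: \<open>0\<close> zero, \<open>1\<close> successor,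
\<open>2\<close> projection (index \<open>psnd P\<close>), \<open>3\<close> composition (outer program \<open>pfst (psnd P)\<close>, coded
list of inner programs \<open>psnd (psnd P)\<close>), \<open>4\<close> primitive recursion (base \<open>pfst (psnd P)\<close>,
step \<open>psnd (psnd P)\<close>) and \<open>5\<close> minimisation (body \<open>psnd P\<close>). \<open>eval P X v\<close> says that
program \<open>P\<close> on the coded argument list \<open>X\<close> terminates with value \<open>v\<close>.\<close>

inductive eval :: "nat \<Rightarrow> nat \<Rightarrow> nat \<Rightarrow> bool" where
  eval_zero: "pfst P = 0 \<Longrightarrow> eval P X 0"
| eval_succ: "pfst P = 1 \<Longrightarrow> eval P X (Suc (code_hd X))"
| eval_proj: "pfst P = 2 \<Longrightarrow> eval P X (code_nth X (psnd P))"
| eval_comp: "pfst P = 3 \<Longrightarrow> eval (pfst (psnd P)) Y v \<Longrightarrow> code_length Y = code_length (psnd (psnd P))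
    \<Longrightarrow> (\<forall>j<code_length (psnd (psnd P)). eval (code_nth (psnd (psnd P)) j) X (code_nth Y j))
    \<Longrightarrow> eval P X v"
| eval_prim_0: "pfst P = 4 \<Longrightarrow> X \<noteq> 0 \<Longrightarrow> code_hd X = 0 \<Longrightarrow> eval (pfst (psnd P)) (code_tl X) v
    \<Longrightarrow> eval P X v"
| eval_prim_Suc: "pfst P = 4 \<Longrightarrow> X \<noteq> 0 \<Longrightarrow> code_hd X = Suc m \<Longrightarrow> eval P (code_Cons m (code_tl X)) r
    \<Longrightarrow> eval (psnd (psnd P)) (code_Cons m (code_Cons r (code_tl X))) v \<Longrightarrow> eval P X v"
| eval_mu: "pfst P = 5 \<Longrightarrow> eval (psnd P) (code_Cons v X) 0
    \<Longrightarrow> (\<forall>y<v. \<exists>r. r \<noteq> 0 \<and> eval (psnd P) (code_Cons y X) r) \<Longrightarrow> eval P X v"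

lemma eval_zero_iff: "pfst P = 0 \<Longrightarrow> eval P X v \<longleftrightarrow> v = 0"
  by (auto elim: eval.cases intro: eval_zero)

lemma eval_succ_iff: "pfst P = 1 \<Longrightarrow> eval P X v \<longleftrightarrow> v = Suc (code_hd X)"
  by (auto elim: eval.cases intro: eval_succ)

lemma eval_proj_iff: "pfst P = 2 \<Longrightarrow> eval P X v \<longleftrightarrow> v = code_nth X (psnd P)"
  by (auto elim: eval.cases intro: eval_proj)

lemma eval_comp_iff: "pfst P = 3 \<Longrightarrow> eval P X v \<longleftrightarrow>
    (\<exists>Y. eval (pfst (psnd P)) Y v \<and> code_length Y = code_length (psnd (psnd P))
      \<and> (\<forall>j<code_length (psnd (psnd P)). eval (code_nth (psnd (psnd P)) j) X (code_nth Y j)))"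
  by (rule iffI, (erule eval.cases; simp; blast), blast intro: eval_comp)

lemma eval_prim_iff: "pfst P = 4 \<Longrightarrow> eval P X v \<longleftrightarrow> X \<noteq> 0 \<and>
    ((code_hd X = 0 \<and> eval (pfst (psnd P)) (code_tl X) v) \<or>
     (\<exists>m r. code_hd X = Suc m \<and> eval P (code_Cons m (code_tl X)) r
        \<and> eval (psnd (psnd P)) (code_Cons m (code_Cons r (code_tl X))) v))"
  by (rule iffI, (erule eval.cases; simp; blast), blast intro: eval_prim_0 eval_prim_Suc)

lemma eval_mu_iff: "pfst P = 5 \<Longrightarrow> eval P X v \<longleftrightarrow>
    eval (psnd P) (code_Cons v X) 0 \<and> (\<forall>y<v. \<exists>r. r \<noteq> 0 \<and> eval (psnd P) (code_Cons y X) r)"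
  by (rule iffI, (erule eval.cases; simp; blast), blast intro: eval_mu)

definition computes :: "nat \<Rightarrow> nat \<Rightarrow> (nat list \<Rightarrow> nat) \<Rightarrow> bool" where
  "computes P k f \<longleftrightarrow> (\<forall>xs v. length xs = k \<longrightarrow> (eval P (list_code xs) v \<longleftrightarrow> f xs = v))"

lemma computes_comp:
  assumes f: "computes Pf m f" and gs: "\<And>i. i < m \<Longrightarrow> computes (Pg i) k (gs i)"
  shows "computes (prod_encode (3, prod_encode (Pf, list_code (map Pg [0..<m]))))
    k (\<lambda>xs. f (map (\<lambda>i. gs i xs) [0..<m]))"
  unfolding computes_def
proof (intro allI impI)
  fix xs :: "nat list" and v
  assume xs: "length xs = k"
  let ?ys = "map (\<lambda>i. gs i xs) [0..<m]"
  have inner: "eval (Pg j) (list_code xs) u \<longleftrightarrow> gs j xs = u" if "j < m" for j u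
    using gs[OF that] xs unfolding computes_def by blast
  have "list_code ys = Y \<Longrightarrow> length ys = m \<Longrightarrow>
      (\<forall>j<m. eval (Pg j) (list_code xs) (code_nth Y j)) \<longleftrightarrow> ys = ?ys" for Y ys
    by (auto simp: inner list_eq_iff_nth_eq)
  then have "(\<exists>Y. eval Pf Y v \<and> code_length Y = m \<and> (\<forall>j<m. eval (Pg j) (list_code xs) (code_nth Y j)))
      \<longleftrightarrow> eval Pf (list_code ?ys) v"
    by (metis (no_types, lifting) code_length_list_code length_map list_code_surj diff_zero length_upt)
  also have "\<dots> \<longleftrightarrow> f ?ys = v"
    using f unfolding computes_def by simp
  finally show "eval (prod_encode (3, prod_encode (Pf, list_code (map Pg [0..<m])))) (list_code xs) v
      \<longleftrightarrow> f ?ys = v"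
    by (simp add: eval_comp_iff)
qed

lemma computes_prim:
  assumes f: "computes Pf k f" and g: "computes Pg (k + 2) g"
  shows "computes (prod_encode (4, prod_encode (Pf, Pg)))
    (k + 1) (\<lambda>xs. rec_nat (f (tl xs)) (\<lambda>y r. g (y # r # tl xs)) (hd xs))"
  unfolding computes_def
proof (intro allI impI)
  fix xs :: "nat list" and v
  assume "length xs = k + 1"
  then obtain a T where xs: "xs = a # T" and T: "length T = k"
    by (cases xs) auto
  let ?P = "prod_encode (4, prod_encode (Pf, Pg))"
  have "eval ?P (list_code (a # T)) v \<longleftrightarrow> rec_nat (f T) (\<lambda>y r. g (y # r # T)) a = v" for v
  proof (induction a arbitrary: v)
    case 0
    show ?case
      using f T unfolding computes_def by (subst eval_prim_iff) auto
  next
    case (Suc a)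
    have "eval Pg (code_Cons a (code_Cons r (list_code T))) v \<longleftrightarrow> g (a # r # T) = v" for r
      using g T unfolding computes_def by (metis length_Cons list_code.simps(2) add_2_eq_Suc')
    then show ?case
      using Suc.IH by (subst eval_prim_iff) auto
  qed
  then show "eval ?P (list_code xs) v \<longleftrightarrow> rec_nat (f (tl xs)) (\<lambda>y r. g (y # r # tl xs)) (hd xs) = v"
    by (simp add: xs)
qed

lemma computes_mu:
  assumes f: "computes Pf (k + 1) f" and total: "\<forall>xs. length xs = k \<longrightarrow> (\<exists>y. f (y # xs) = 0)"
  shows "computes (prod_encode (5, Pf)) k (\<lambda>xs. LEAST y. f (y # xs) = 0)"
  unfolding computes_def
proof (intro allI impI)
  fix xs :: "nat list" and v
  assume xs: "length xs = k"
  have "eval Pf (code_Cons y (list_code xs)) u \<longleftrightarrow> f (y # xs) = u" for y u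
    using f xs unfolding computes_def by (metis Suc_eq_plus1 length_Cons list_code.simps(2))
  then have "eval (prod_encode (5, Pf)) (list_code xs) v \<longleftrightarrow> f (v # xs) = 0 \<and> (\<forall>y<v. f (y # xs) \<noteq> 0)"
    by (simp add: eval_mu_iff)
  also have "\<dots> \<longleftrightarrow> (LEAST y. f (y # xs) = 0) = v"
    using total xs by (metis (mono_tags, lifting) LeastI_ex Least_equality not_less not_less_Least)
  finally show "eval (prod_encode (5, Pf)) (list_code xs) v \<longleftrightarrow> (LEAST y. f (y # xs) = 0) = v" .
qed

lemma recfn_program: "recfn k f \<Longrightarrow> \<exists>P. computes P k f"
proof (induction rule: recfn.induct)
  case (rf_zero k)
  show ?case
    by (rule exI[of _ "prod_encode (0, 0)"]) (simp add: computes_def eval_zero_iff eq_commute)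
next
  case rf_succ
  show ?case
    by (rule exI[of _ "prod_encode (1, 0)"])
      (auto simp: computes_def eval_succ_iff length_Suc_conv)
next
  case (rf_proj i k)
  show ?case
    by (rule exI[of _ "prod_encode (2, i)"]) (use rf_proj in \<open>auto simp: computes_def eval_proj_iff\<close>)
next
  case (rf_comp m f k gs)
  then obtain Pf Pg where "computes Pf m f" "\<And>i. i < m \<Longrightarrow> computes (Pg i) k (gs i)"
    by metis
  then show ?case
    by (blast intro: computes_comp)
next
  case (rf_prim k f g)
  then show ?case
    by (blast intro: computes_prim)
next
  case (rf_mu k f)
  then show ?case
    by (blast intro: computes_mu)
next
  case (rf_ext k f g)
  then show ?case
    unfolding computes_def by metis
qed

text \<open>A terminating computation is witnessed by a finite set of claims, each of which is
justified by one step of the evaluation rules from claims in the same set.\<close>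

definition claim :: "nat \<Rightarrow> nat \<Rightarrow> nat \<Rightarrow> nat" where
  "claim P X v = prod_encode (P, prod_encode (X, v))"

lemma claim_decode [simp]:
  "pfst (claim P X v) = P" "pfst (psnd (claim P X v)) = X" "psnd (psnd (claim P X v)) = v"
  by (simp_all add: claim_def)

definition justified :: "nat set \<Rightarrow> nat \<Rightarrow> nat \<Rightarrow> nat \<Rightarrow> bool" where
  "justified S P X v \<longleftrightarrow>
     (pfst P = 0 \<and> v = 0) \<or> (pfst P = 1 \<and> v = Suc (code_hd X)) \<or> (pfst P = 2 \<and> v = code_nth X (psnd P))
   \<or> (pfst P = 3 \<and> (\<exists>Y. claim (pfst (psnd P)) Y v \<in> S \<and> code_length Y = code_length (psnd (psnd P))
        \<and> (\<forall>j<code_length (psnd (psnd P)). claim (code_nth (psnd (psnd P)) j) X (code_nth Y j) \<in> S)))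
   \<or> (pfst P = 4 \<and> X \<noteq> 0 \<and> code_hd X = 0 \<and> claim (pfst (psnd P)) (code_tl X) v \<in> S)
   \<or> (pfst P = 4 \<and> X \<noteq> 0 \<and> code_hd X \<noteq> 0 \<and> (\<exists>r. claim P (code_Cons (code_hd X - 1) (code_tl X)) r \<in> S
        \<and> claim (psnd (psnd P)) (code_Cons (code_hd X - 1) (code_Cons r (code_tl X))) v \<in> S))
   \<or> (pfst P = 5 \<and> claim (psnd P) (code_Cons v X) 0 \<in> S
        \<and> (\<forall>y<v. \<exists>r. r \<noteq> 0 \<and> claim (psnd P) (code_Cons y X) r \<in> S))"

definition closed_claims :: "nat set \<Rightarrow> bool" where
  "closed_claims S \<longleftrightarrow> (\<forall>q\<in>S. justified S (pfst q) (pfst (psnd q)) (psnd (psnd q)))"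

lemma justified_mono: "justified S P X v \<Longrightarrow> S \<subseteq> S' \<Longrightarrow> justified S' P X v"
  unfolding justified_def by blast

text \<open>Soundness, by induction on the program and, for a fixed program, on the argument
list: primitive recursion is the only rule that refers back to the same program.\<close>

lemma eval_if_closed_claims:
  assumes closed: "closed_claims S"
  shows "claim P X v \<in> S \<Longrightarrow> eval P X v"
proof (induction P arbitrary: X v rule: less_induct)
  case (less P)
  note IH_prog = less.IH
  show ?case
    using less.prems
  proof (induction X arbitrary: v rule: less_induct)
    case (less X)
    have smaller: "psnd P < P" "pfst (psnd P) < P" "psnd (psnd P) < P" if "pfst P \<noteq> 0"
      using psnd_less[OF that] pfst_le[of "psnd P"] psnd_le[of "psnd P"] by linarith+
    have "justified S P X v"
      using closed less.prems unfolding closed_claims_def by (metis claim_decode)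
    then show ?case
      unfolding justified_def
    proof (elim disjE conjE exE)
      assume "pfst P = 0" "v = 0"
      then show ?thesis by (simp add: eval_zero)
    next
      assume "pfst P = 1" "v = Suc (code_hd X)"
      then show ?thesis by (simp add: eval_succ)
    next
      assume "pfst P = 2" "v = code_nth X (psnd P)"
      then show ?thesis by (simp add: eval_proj)
    next
      fix Y
      assume P: "pfst P = 3" and Y: "claim (pfst (psnd P)) Y v \<in> S"
        "code_length Y = code_length (psnd (psnd P))"
        "\<forall>j<code_length (psnd (psnd P)). claim (code_nth (psnd (psnd P)) j) X (code_nth Y j) \<in> S"
      have "code_nth (psnd (psnd P)) j < P" if "j < code_length (psnd (psnd P))" for j
        using code_nth_less[OF that] smaller(3) P by simp
      then have "\<forall>j<code_length (psnd (psnd P)). eval (code_nth (psnd (psnd P)) j) X (code_nth Y j)"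
        using IH_prog Y(3) by blast
      moreover have "eval (pfst (psnd P)) Y v"
        using IH_prog[OF smaller(2) Y(1)] P by simp
      ultimately show ?thesis
        using eval_comp[OF P _ Y(2)] by blast
    next
      assume P: "pfst P = 4" and X: "X \<noteq> 0" "code_hd X = 0"
        and c: "claim (pfst (psnd P)) (code_tl X) v \<in> S"
      show ?thesis
        using eval_prim_0[OF P X IH_prog[OF smaller(2) c]] P by simp
    next
      fix r
      assume P: "pfst P = 4" and X: "X \<noteq> 0" "code_hd X \<noteq> 0"
        and r: "claim P (code_Cons (code_hd X - 1) (code_tl X)) r \<in> S"
          "claim (psnd (psnd P)) (code_Cons (code_hd X - 1) (code_Cons r (code_tl X))) v \<in> S"
      have "code_Cons (code_hd X - 1) (code_tl X) < X"
        using prod_encode_less_fst[of "code_hd X - 1" "code_hd X" "code_tl X"] code_Cons_hd_tl[OF X(1)] X(2)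
        unfolding code_Cons_def by simp
      from less.IH[OF this r(1)] IH_prog[OF smaller(3) r(2)] show ?thesis
        using eval_prim_Suc[OF P X(1), of "code_hd X - 1"] P X(2) by simp
    next
      assume P: "pfst P = 5" and c: "claim (psnd P) (code_Cons v X) 0 \<in> S"
        and below: "\<forall>y<v. \<exists>r. r \<noteq> 0 \<and> claim (psnd P) (code_Cons y X) r \<in> S"
      have "psnd P < P"
        using smaller(1) P by simp
      then show ?thesis
        using eval_mu[OF P] IH_prog c below by meson
    qed
  qed
qed

definition derivable :: "nat \<Rightarrow> bool" where
  "derivable q \<longleftrightarrow> (\<exists>S. finite S \<and> closed_claims S \<and> q \<in> S)"

lemma derivableI:
  assumes S: "finite S" "\<And>q. q \<in> S \<Longrightarrow> derivable q" and just: "justified S P X v"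
  shows "derivable (claim P X v)"
proof -
  obtain T where T: "\<And>q. q \<in> S \<Longrightarrow> finite (T q) \<and> closed_claims (T q) \<and> q \<in> T q"
    using S(2) unfolding derivable_def by metis
  define U where "U = insert (claim P X v) (\<Union>q\<in>S. T q)"
  have "justified U (pfst q) (pfst (psnd q)) (psnd (psnd q))" if q: "q \<in> U" for q
  proof (cases "q = claim P X v")
    case True
    have "S \<subseteq> U"
      using T unfolding U_def by blast
    with just True show ?thesis
      by (simp add: justified_mono)
  next
    case False
    then obtain p where "p \<in> S" "q \<in> T p"
      using q unfolding U_def by blast
    moreover have "T p \<subseteq> U"
      using \<open>p \<in> S\<close> unfolding U_def by blast
    ultimately show ?thesis
      using T unfolding closed_claims_def by (blast intro: justified_mono)
  qed
  moreover have "finite U"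
    using S(1) T unfolding U_def by simp
  ultimately show ?thesis
    unfolding derivable_def closed_claims_def U_def by blast
qed

lemma derivable_if_eval: "eval P X v \<Longrightarrow> derivable (claim P X v)"
proof (induction rule: eval.induct)
  case (eval_comp P Y v X)
  let ?S = "insert (claim (pfst (psnd P)) Y v)
    ((\<lambda>j. claim (code_nth (psnd (psnd P)) j) X (code_nth Y j)) ` {..<code_length (psnd (psnd P))})"
  show ?case
    by (rule derivableI[of ?S]) (use eval_comp in \<open>auto simp: justified_def\<close>)
next
  case (eval_mu P v X)
  then obtain r where r: "\<And>y. y < v \<Longrightarrow> r y \<noteq> 0 \<and> derivable (claim (psnd P) (code_Cons y X) (r y))"
    by metis
  let ?S = "insert (claim (psnd P) (code_Cons v X) 0) ((\<lambda>y. claim (psnd P) (code_Cons y X) (r y)) ` {..<v})"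
  show ?case
    by (rule derivableI[of ?S]) (use eval_mu r in \<open>auto simp: justified_def\<close>)
next
  case (eval_prim_0 P X v)
  then show ?case
    by (intro derivableI[of "{claim (pfst (psnd P)) (code_tl X) v}"]) (auto simp: justified_def)
next
  case (eval_prim_Suc P X m r v)
  then show ?case
    by (intro derivableI[of "{claim P (code_Cons m (code_tl X)) r,
        claim (psnd (psnd P)) (code_Cons m (code_Cons r (code_tl X))) v}"]) (auto simp: justified_def)
qed (auto intro!: derivableI[of "{}"] simp: justified_def)

text \<open>The same notion for a coded list \<open>L\<close> of claims, with the existential quantifiers
bounded by \<open>L\<close> so that it becomes decidable.\<close>

definition justified_code :: "nat \<Rightarrow> nat \<Rightarrow> nat \<Rightarrow> nat \<Rightarrow> bool" where
  "justified_code L P X v \<longleftrightarrow>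
     (pfst P = 0 \<and> v = 0) \<or> (pfst P = 1 \<and> v = Suc (code_hd X)) \<or> (pfst P = 2 \<and> v = code_nth X (psnd P))
   \<or> (pfst P = 3 \<and> (\<exists>Y\<le>L. code_mem (claim (pfst (psnd P)) Y v) L \<and> code_length Y = code_length (psnd (psnd P))
        \<and> (\<forall>j<code_length (psnd (psnd P)). code_mem (claim (code_nth (psnd (psnd P)) j) X (code_nth Y j)) L)))
   \<or> (pfst P = 4 \<and> X \<noteq> 0 \<and> code_hd X = 0 \<and> code_mem (claim (pfst (psnd P)) (code_tl X) v) L)
   \<or> (pfst P = 4 \<and> X \<noteq> 0 \<and> code_hd X \<noteq> 0 \<and> (\<exists>r\<le>L. code_mem (claim P (code_Cons (code_hd X - 1) (code_tl X)) r) L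
        \<and> code_mem (claim (psnd (psnd P)) (code_Cons (code_hd X - 1) (code_Cons r (code_tl X))) v) L))
   \<or> (pfst P = 5 \<and> code_mem (claim (psnd P) (code_Cons v X) 0) L
        \<and> (\<forall>y<v. \<exists>r\<le>L. r \<noteq> 0 \<and> code_mem (claim (psnd P) (code_Cons y X) r) L))"

definition certificate :: "nat \<Rightarrow> bool" where
  "certificate L \<longleftrightarrow> (\<forall>i<code_length L.
     justified_code L (pfst (code_nth L i)) (pfst (psnd (code_nth L i))) (psnd (psnd (code_nth L i))))"

lemma claim_list_code_bound: "claim P Y v \<in> set qs \<Longrightarrow> Y \<le> list_code qs \<and> v \<le> list_code qs"
  using list_code_greater[of "claim P Y v" qs] prod_encode_ge_fst[of Y v] prod_encode_ge_snd[of v Y]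
    prod_encode_ge_snd[of "prod_encode (Y, v)" P]
  unfolding claim_def by linarith

lemma justified_code_list_code: "justified_code (list_code qs) P X v \<longleftrightarrow> justified (set qs) P X v"
proof -
  have bound: "(\<exists>Y\<le>list_code qs. A Y) \<longleftrightarrow> (\<exists>Y. A Y)"
    if "\<And>Y. A Y \<Longrightarrow> Y \<le> list_code qs" for A
    using that by blast
  show ?thesis
    unfolding justified_code_def justified_def code_mem_list_code
    by (subst (1 2 3) bound) (use claim_list_code_bound in blast)+
qed

lemma certificate_list_code: "certificate (list_code qs) \<longleftrightarrow> closed_claims (set qs)"
  unfolding certificate_def closed_claims_def justified_code_list_code code_length_list_code
  by (metis code_nth_list_code in_set_conv_nth)

lemma rec_fun_claim: "rec_fun f \<Longrightarrow> rec_fun g \<Longrightarrow> rec_fun h \<Longrightarrow> rec_fun (\<lambda>x. claim (f x) (g x) (h x))"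
  unfolding claim_def by (intro rec_fun_prod_encode)

lemma rec_pred_certificate: "rec_pred certificate"
proof -
  have "rec_pred (\<lambda>L. certificate L)"
    unfolding certificate_def justified_code_def by (intro rec_fun_intros rec_fun_claim)
  then show ?thesis by simp
qed

lemma eval_iff_derivable: "eval P X v \<longleftrightarrow> derivable (claim P X v)"
  using derivable_if_eval eval_if_closed_claims unfolding derivable_def by blast

lemma derivable_iff_certificate:
  "derivable q \<longleftrightarrow> (\<exists>L. certificate L \<and> code_mem q L)"
proof
  assume "derivable q"
  then obtain S where S: "finite S" "closed_claims S" "q \<in> S"
    unfolding derivable_def by blast
  obtain qs where "set qs = S"
    using finite_list[OF S(1)] by blast
  with S show "\<exists>L. certificate L \<and> code_mem q L"
    by (intro exI[of _ "list_code qs"]) (simp add: certificate_list_code)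
next
  assume "\<exists>L. certificate L \<and> code_mem q L"
  then obtain qs where "certificate (list_code qs)" "code_mem q (list_code qs)"
    using list_code_surj by metis
  then show "derivable q"
    unfolding derivable_def certificate_list_code code_mem_list_code by blast
qed

lemma recfn_normal_form:
  assumes "recfn 1 f"
  obtains P where "\<And>z v. f [z] = v \<longleftrightarrow> (\<exists>L. certificate L \<and> code_mem (claim P (code_Cons z 0) v) L)"
proof -
  obtain P where P: "computes P 1 f"
    using recfn_program[OF assms] by blast
  have "f [z] = v \<longleftrightarrow> eval P (list_code [z]) v" for z v
    using P[unfolded computes_def, rule_format, of "[z]" v] by auto
  then show ?thesis
    by (intro that) (simp add: eval_iff_derivable derivable_iff_certificate)
qed

section \<open>The arithmetical hierarchy\<close>

lemma Sigma0_0_iff: "Sigma0 0 A \<longleftrightarrow> rec_pred (\<lambda>x. x \<in> A)"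
proof
  assume "Sigma0 0 A"
  then obtain f where f: "recfn 1 f" "\<And>x. x \<in> A \<longleftrightarrow> f [x] = 0"
    unfolding Sigma0.simps computable_set_def by blast
  have "rec_pred (\<lambda>x. f [x] = 0)"
    by (intro rec_pred_eq rec_fun_recfn1[OF f(1)] rec_fun_const)
  then show "rec_pred (\<lambda>x. x \<in> A)"
    using f(2) by simp
next
  assume "rec_pred (\<lambda>x. x \<in> A)"
  then have "rec_pred (\<lambda>x. x \<notin> A)"
    by (rule rec_pred_not)
  then have "recfn 1 (\<lambda>xs. if hd xs \<notin> A then 1 else 0)"
    unfolding rec_pred_def rec_fun_def .
  then show "Sigma0 0 A"
    unfolding Sigma0.simps computable_set_def by (intro exI[of _ "\<lambda>xs. if hd xs \<notin> A then 1 else 0"]) simp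
qed

lemma Sigma0_Suc_iff:
  "Sigma0 (Suc p) A \<longleftrightarrow> (\<exists>B. Sigma0 p (- B) \<and> A = {x. \<exists>y. prod_encode (x, y) \<in> B})"
  by simp

declare Sigma0.simps [simp del]

lemma Sigma0_rec_pred: "rec_pred (\<lambda>x. x \<in> A) \<Longrightarrow> Sigma0 p A"
proof (induction p arbitrary: A)
  case 0
  then show ?case by (simp add: Sigma0_0_iff)
next
  case (Suc p)
  have "rec_pred (\<lambda>z. z \<in> - {z. pfst z \<in> A})"
    using rec_pred_not[OF rec_pred_comp[OF Suc.prems rec_fun_pfst[OF rec_fun_id]]] by simp
  then have "Sigma0 p (- {z. pfst z \<in> A})"
    by (rule Suc.IH)
  then show ?case
    unfolding Sigma0_Suc_iff by (intro exI[of _ "{z. pfst z \<in> A}"]) simp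
qed

lemma Sigma0_vimage: "Sigma0 p A \<Longrightarrow> rec_fun h \<Longrightarrow> Sigma0 p {x. h x \<in> A}"
proof (induction p arbitrary: A h)
  case 0
  then show ?case
    using rec_pred_comp[of "\<lambda>x. x \<in> A" h] by (simp add: Sigma0_0_iff)
next
  case (Suc p)
  obtain B where B: "Sigma0 p (- B)" "A = {x. \<exists>y. prod_encode (x, y) \<in> B}"
    using Suc.prems(1) unfolding Sigma0_Suc_iff by blast
  let ?k = "\<lambda>z. prod_encode (h (pfst z), psnd z)"
  have "rec_fun ?k"
    by (intro rec_fun_prod_encode rec_fun_comp[OF Suc.prems(2)] rec_fun_pfst rec_fun_psnd rec_fun_id)
  then have "Sigma0 p {z. ?k z \<in> - B}"
    by (rule Suc.IH[OF B(1)])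
  moreover have "{x. h x \<in> A} = {x. \<exists>y. prod_encode (x, y) \<in> {z. ?k z \<in> B}}"
    using B(2) by simp
  ultimately show ?case
    unfolding Sigma0_Suc_iff by (intro exI[of _ "{z. ?k z \<in> B}"]) (simp add: Compl_eq)
qed

lemma Sigma0_Un_Int: "Sigma0 p A \<Longrightarrow> Sigma0 p B \<Longrightarrow> Sigma0 p (A \<union> B) \<and> Sigma0 p (A \<inter> B)"
proof (induction p arbitrary: A B)
  case 0
  then show ?case
    unfolding Sigma0_0_iff using rec_pred_disj rec_pred_conj by fastforce
next
  case (Suc p)
  obtain CA CB where C: "Sigma0 p (- CA)" "A = {x. \<exists>y. prod_encode (x, y) \<in> CA}"
    "Sigma0 p (- CB)" "B = {x. \<exists>y. prod_encode (x, y) \<in> CB}"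
    using Suc.prems unfolding Sigma0_Suc_iff by blast
  have "Sigma0 p (- (CA \<union> CB))"
    using Suc.IH[OF C(1,3)] by simp
  moreover have "A \<union> B = {x. \<exists>y. prod_encode (x, y) \<in> CA \<union> CB}"
    using C by blast
  ultimately have "Sigma0 (Suc p) (A \<union> B)"
    unfolding Sigma0_Suc_iff by blast
  \<comment> \<open>for the intersection the witness is a pair of witnesses\<close>
  let ?CI = "{z. prod_encode (pfst z, pfst (psnd z)) \<in> CA \<and> prod_encode (pfst z, psnd (psnd z)) \<in> CB}"
  have "rec_fun (\<lambda>z. prod_encode (pfst z, pfst (psnd z)))" "rec_fun (\<lambda>z. prod_encode (pfst z, psnd (psnd z)))"
    by (intro rec_fun_intros)+
  from Suc.IH[OF Sigma0_vimage[OF C(1) this(1)] Sigma0_vimage[OF C(3) this(2)]]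
  have "Sigma0 p ({z. prod_encode (pfst z, pfst (psnd z)) \<in> - CA} \<union> {z. prod_encode (pfst z, psnd (psnd z)) \<in> - CB})"
    by blast
  moreover have "{z. prod_encode (pfst z, pfst (psnd z)) \<in> - CA} \<union> {z. prod_encode (pfst z, psnd (psnd z)) \<in> - CB}
      = - ?CI"
    by auto
  ultimately have "Sigma0 p (- ?CI)"
    by (simp only:)
  moreover have "A \<inter> B = {x. \<exists>y. prod_encode (x, y) \<in> ?CI}"
  proof (intro set_eqI iffI)
    fix x
    assume "x \<in> A \<inter> B"
    then obtain y1 y2 where "prod_encode (x, y1) \<in> CA" "prod_encode (x, y2) \<in> CB"
      using C by blast
    then show "x \<in> {x. \<exists>y. prod_encode (x, y) \<in> ?CI}"
      by (intro CollectI exI[of _ "prod_encode (y1, y2)"]) simp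
  qed (use C in auto)
  ultimately have "Sigma0 (Suc p) (A \<inter> B)"
    unfolding Sigma0_Suc_iff by blast
  with \<open>Sigma0 (Suc p) (A \<union> B)\<close> show ?case ..
qed

lemma Sigma0_Un: "Sigma0 p A \<Longrightarrow> Sigma0 p B \<Longrightarrow> Sigma0 p (A \<union> B)"
  using Sigma0_Un_Int by blast

lemma Sigma0_Int: "Sigma0 p A \<Longrightarrow> Sigma0 p B \<Longrightarrow> Sigma0 p (A \<inter> B)"
  using Sigma0_Un_Int by blast

lemma Sigma0_Suc_project: "Sigma0 (Suc p) A \<Longrightarrow> Sigma0 (Suc p) {x. \<exists>y. prod_encode (x, y) \<in> A}"
proof -
  assume "Sigma0 (Suc p) A"
  then obtain B where B: "Sigma0 p (- B)" "A = {x. \<exists>y. prod_encode (x, y) \<in> B}"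
    unfolding Sigma0_Suc_iff by blast
  let ?k = "\<lambda>z. prod_encode (prod_encode (pfst z, pfst (psnd z)), psnd (psnd z))"
  have "Sigma0 p {z. ?k z \<in> - B}"
    by (rule Sigma0_vimage[OF B(1)]) (intro rec_fun_intros)
  moreover have "{x. \<exists>y. prod_encode (x, y) \<in> A} = {x. \<exists>w. prod_encode (x, w) \<in> {z. ?k z \<in> B}}"
  proof (intro set_eqI iffI)
    fix x
    assume "x \<in> {x. \<exists>y. prod_encode (x, y) \<in> A}"
    then obtain y u where "prod_encode (prod_encode (x, y), u) \<in> B"
      using B(2) by auto
    then show "x \<in> {x. \<exists>w. prod_encode (x, w) \<in> {z. ?k z \<in> B}}"
      by (intro CollectI exI[of _ "prod_encode (y, u)"]) simp
  qed (use B(2) in auto)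
  ultimately show ?thesis
    unfolding Sigma0_Suc_iff by (intro exI[of _ "{z. ?k z \<in> B}"]) (simp add: Compl_eq)
qed

lemma Sigma0_Suc_if_Pi0: "Pi0 p A \<Longrightarrow> Sigma0 (Suc p) A"
proof -
  assume "Pi0 p A"
  then have "Sigma0 p {z. pfst z \<in> - A}"
    unfolding Pi0_def by (rule Sigma0_vimage) (rule rec_fun_pfst[OF rec_fun_id])
  moreover have "{z. pfst z \<in> - A} = - {z. pfst z \<in> A}"
    by auto
  ultimately show ?thesis
    unfolding Sigma0_Suc_iff by (intro exI[of _ "{z. pfst z \<in> A}"]) simp
qed

lemma Sigma0_Suc: "Sigma0 p A \<Longrightarrow> Sigma0 (Suc p) A"
proof (induction p arbitrary: A)
  case 0
  then show ?case
    using rec_pred_not by (intro Sigma0_Suc_if_Pi0) (fastforce simp: Pi0_def Sigma0_0_iff)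
next
  case (Suc p)
  then obtain B where "Sigma0 p (- B)" "A = {x. \<exists>y. prod_encode (x, y) \<in> B}"
    unfolding Sigma0_Suc_iff by blast
  with Suc.IH show ?case
    unfolding Sigma0_Suc_iff[of "Suc p"] by blast
qed

lemma Sigma0_mono:
  assumes "Sigma0 p A" "p \<le> q"
  shows "Sigma0 q A"
  using assms(2) by (induction rule: dec_induct) (use assms(1) Sigma0_Suc in auto)

lemma Pi0_rec_pred: "rec_pred (\<lambda>x. x \<in> A) \<Longrightarrow> Pi0 p A"
  unfolding Pi0_def by (rule Sigma0_rec_pred) (use rec_pred_not in fastforce)

lemma Pi0_vimage: "Pi0 p A \<Longrightarrow> rec_fun h \<Longrightarrow> Pi0 p {x. h x \<in> A}"
  unfolding Pi0_def using Sigma0_vimage[of p "- A" h] by (simp add: Compl_eq)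

lemma Pi0_Un: "Pi0 p A \<Longrightarrow> Pi0 p B \<Longrightarrow> Pi0 p (A \<union> B)"
  unfolding Pi0_def using Sigma0_Int by auto

lemma Pi0_Int: "Pi0 p A \<Longrightarrow> Pi0 p B \<Longrightarrow> Pi0 p (A \<inter> B)"
  unfolding Pi0_def using Sigma0_Un by auto

text \<open>\<open>kleene_T e x w\<close>: \<open>w\<close> packs a number \<open>y\<close>, a nonzero value \<open>v\<close> and a certificate
that program \<open>e\<close> maps \<open>prod_encode (x, y)\<close> to \<open>v\<close>.\<close>

definition kleene_T :: "nat \<Rightarrow> nat \<Rightarrow> nat \<Rightarrow> bool" where
  "kleene_T e x w \<longleftrightarrow> certificate (psnd (psnd w)) \<and> pfst (psnd w) \<noteq> 0 \<and>
     code_mem (claim e (code_Cons (prod_encode (x, pfst w)) 0) (pfst (psnd w))) (psnd (psnd w))"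

definition univ_Sigma1 :: "nat set" where
  "univ_Sigma1 = {u. \<exists>w. kleene_T (pfst u) (psnd u) w}"

text \<open>\<open>univ_Sigma p\<close> is universal for \<open>\<Sigma>\<^sup>0\<^sub>p\<^sub>+\<^sub>1\<close>.\<close>

fun univ_Sigma :: "nat \<Rightarrow> nat set" where
  "univ_Sigma 0 = univ_Sigma1"
| "univ_Sigma (Suc p) = {u. \<exists>y. prod_encode (pfst u, prod_encode (psnd u, y)) \<notin> univ_Sigma p}"

lemma Sigma1_univ_Sigma1: "Sigma0 1 univ_Sigma1"
proof -
  let ?B = "{z. kleene_T (pfst (pfst z)) (psnd (pfst z)) (psnd z)}"
  have "rec_pred (\<lambda>z. \<not> kleene_T (pfst (pfst z)) (psnd (pfst z)) (psnd z))"
    unfolding kleene_T_def by (intro rec_fun_intros rec_pred_comp[OF rec_pred_certificate] rec_fun_claim)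
  then have "Sigma0 0 (- ?B)"
    by (simp add: Sigma0_0_iff)
  moreover have "univ_Sigma1 = {x. \<exists>y. prod_encode (x, y) \<in> ?B}"
    by (simp add: univ_Sigma1_def)
  ultimately show ?thesis
    unfolding One_nat_def Sigma0_Suc_iff by blast
qed

lemma univ_Sigma1_universal:
  assumes "Sigma0 1 A"
  obtains e where "\<And>x. x \<in> A \<longleftrightarrow> prod_encode (e, x) \<in> univ_Sigma1"
proof -
  obtain B where B: "Sigma0 0 (- B)" "A = {x. \<exists>y. prod_encode (x, y) \<in> B}"
    using assms unfolding One_nat_def Sigma0_Suc_iff by blast
  then obtain f where f: "recfn 1 f" "\<And>z. z \<in> - B \<longleftrightarrow> f [z] = 0"
    unfolding Sigma0.simps computable_set_def by blast
  obtain e where e: "\<And>z v. f [z] = v \<longleftrightarrow> (\<exists>L. certificate L \<and> code_mem (claim e (code_Cons z 0) v) L)"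
    using recfn_normal_form[OF f(1)] by blast
  have "x \<in> A \<longleftrightarrow> (\<exists>y v. v \<noteq> 0 \<and> f [prod_encode (x, y)] = v)" for x
    using B(2) f(2) by auto
  also have "\<dots> x \<longleftrightarrow>
      (\<exists>y v L. v \<noteq> 0 \<and> certificate L \<and> code_mem (claim e (code_Cons (prod_encode (x, y)) 0) v) L)" for x
    unfolding e by blast
  also have "\<dots> x \<longleftrightarrow> (\<exists>w. kleene_T e x w)" for x
  proof
    assume "\<exists>y v L. v \<noteq> 0 \<and> certificate L \<and> code_mem (claim e (code_Cons (prod_encode (x, y)) 0) v) L"
    then obtain y v L where "v \<noteq> 0 \<and> certificate L \<and> code_mem (claim e (code_Cons (prod_encode (x, y)) 0) v) L"
      by blast
    then show "\<exists>w. kleene_T e x w"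
      unfolding kleene_T_def by (intro exI[of _ "prod_encode (y, prod_encode (v, L))"]) simp
  qed (auto simp: kleene_T_def)
  finally show ?thesis
    by (intro that) (simp add: univ_Sigma1_def)
qed

lemma univ_Sigma_universal:
  "Sigma0 (Suc p) (univ_Sigma p) \<and>
   (\<forall>A. Sigma0 (Suc p) A \<longrightarrow> (\<exists>e. \<forall>x. x \<in> A \<longleftrightarrow> prod_encode (e, x) \<in> univ_Sigma p))"
proof (induction p)
  case 0
  show ?case
  proof (intro conjI allI impI)
    show "Sigma0 (Suc 0) (univ_Sigma 0)"
      using Sigma1_univ_Sigma1 by simp
    fix A
    assume "Sigma0 (Suc 0) A"
    then obtain e where "\<And>x. x \<in> A \<longleftrightarrow> prod_encode (e, x) \<in> univ_Sigma1"
      using univ_Sigma1_universal[of A] by auto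
    then show "\<exists>e. \<forall>x. x \<in> A \<longleftrightarrow> prod_encode (e, x) \<in> univ_Sigma 0"
      by auto
  qed
next
  case (Suc p)
  let ?k = "\<lambda>z. prod_encode (pfst (pfst z), prod_encode (psnd (pfst z), psnd z))"
  have "rec_fun ?k"
    by (intro rec_fun_intros)
  then have "Sigma0 (Suc p) {z. ?k z \<in> univ_Sigma p}"
    using Suc.IH Sigma0_vimage by blast
  moreover have "univ_Sigma (Suc p) = {x. \<exists>y. prod_encode (x, y) \<in> - {z. ?k z \<in> univ_Sigma p}}"
    by simp
  ultimately have "Sigma0 (Suc (Suc p)) (univ_Sigma (Suc p))"
    unfolding Sigma0_Suc_iff[of "Suc p"] by (intro exI[of _ "- {z. ?k z \<in> univ_Sigma p}"]) simp
  moreover have "\<exists>e. \<forall>x. x \<in> A \<longleftrightarrow> prod_encode (e, x) \<in> univ_Sigma (Suc p)"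
    if A: "Sigma0 (Suc (Suc p)) A" for A
  proof -
    obtain B where B: "Sigma0 (Suc p) (- B)" "A = {x. \<exists>y. prod_encode (x, y) \<in> B}"
      using A unfolding Sigma0_Suc_iff[of "Suc p"] by blast
    then obtain e where "\<And>z. z \<in> - B \<longleftrightarrow> prod_encode (e, z) \<in> univ_Sigma p"
      using Suc.IH by blast
    then show ?thesis
      using B(2) by (intro exI[of _ e]) auto
  qed
  ultimately show ?case
    by blast
qed

section \<open>A relation that is complete under \<open>n\<close>-ary reducibility\<close>

lemma rtrancl_iff_relpow_bounded:
  assumes R: "R \<subseteq> {0..<n} \<times> {0..<n}"
  shows "(a, b) \<in> R\<^sup>* \<longleftrightarrow> (\<exists>k<Suc (n * n). (a, b) \<in> R ^^ k)"
proof
  have fin: "finite R" and card: "card R \<le> n * n"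
    using R finite_subset card_mono[OF _ R] by auto
  assume "(a, b) \<in> R\<^sup>*"
  then obtain k where "k \<le> card R" "(a, b) \<in> R ^^ k"
    using rtrancl_finite_eq_relpow[OF fin] by auto
  with card show "\<exists>k<Suc (n * n). (a, b) \<in> R ^^ k"
    by (intro exI[of _ k]) auto
qed (auto intro: relpow_imp_rtrancl)

text \<open>\<open>K\<close> abstracts \<open>\<Sigma>\<^sup>0\<^sub>p\<close> or \<open>\<Pi>\<^sup>0\<^sub>p\<close> for \<open>p > 0\<close>, with \<open>W\<close> a universal set of the class.\<close>

locale universal_class =
  fixes K :: "nat set \<Rightarrow> bool" and W :: "nat set"
  assumes K_vimage: "K A \<Longrightarrow> rec_fun h \<Longrightarrow> K {x. h x \<in> A}"
    and K_Un: "K A \<Longrightarrow> K B \<Longrightarrow> K (A \<union> B)"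
    and K_Int: "K A \<Longrightarrow> K B \<Longrightarrow> K (A \<inter> B)"
    and K_rec_pred: "rec_pred (\<lambda>x. x \<in> A) \<Longrightarrow> K A"
    and K_W: "K W"
    and K_universal: "K A \<Longrightarrow> \<exists>e. \<forall>x. x \<in> A \<longleftrightarrow> prod_encode (e, x) \<in> W"
begin

lemma K_UN: "(\<And>m. m < (N :: nat) \<Longrightarrow> K (A m)) \<Longrightarrow> K (\<Union>m<N. A m)"
proof (induction N)
  case 0
  show ?case
    using K_rec_pred[of "{}"] by (simp add: rec_pred_const)
next
  case (Suc N)
  then show ?case
    using K_Un[of "\<Union>m<N. A m" "A N"] by (simp add: lessThan_Suc Un_commute)
qed

lemma K_INT: "(\<And>m. m < (N :: nat) \<Longrightarrow> K (A m)) \<Longrightarrow> K (\<Inter>m<N. A m)"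
proof (induction N)
  case 0
  show ?case
    using K_rec_pred[of UNIV] by (simp add: rec_pred_const)
next
  case (Suc N)
  then show ?case
    using K_Int[of "\<Inter>m<N. A m" "A N"] by (simp add: lessThan_Suc Int_commute)
qed

definition coded_edge :: "nat \<Rightarrow> nat \<Rightarrow> nat \<Rightarrow> bool" where
  "coded_edge c i j \<longleftrightarrow> prod_encode (pfst c, prod_encode (psnd c, prod_encode (i, j))) \<in> W"

definition coded_graph :: "nat \<Rightarrow> nat \<Rightarrow> (nat \<times> nat) set" where
  "coded_graph n c = {(i, j). i < n \<and> j < n \<and> (coded_edge c i j \<or> coded_edge c j i)}"

definition graph_eqrel :: "nat \<Rightarrow> (nat \<times> nat) set" where
  "graph_eqrel n = {(y, y'). pfst y = pfst y' \<and> (psnd y, psnd y') \<in> (coded_graph n (pfst y))\<^sup>*}"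

lemma coded_graph_subset: "coded_graph n c \<subseteq> {0..<n} \<times> {0..<n}"
  unfolding coded_graph_def by auto

lemma equiv_graph_eqrel: "equiv UNIV (graph_eqrel n)"
proof (rule equivI)
  have "sym ((coded_graph n c)\<^sup>*)" for c
    by (rule sym_rtrancl) (auto simp: coded_graph_def sym_def)
  then show "sym (graph_eqrel n)"
    unfolding graph_eqrel_def sym_def by auto
  show "trans (graph_eqrel n)"
    unfolding graph_eqrel_def trans_def by (auto intro: rtrancl_trans)
qed (auto simp: graph_eqrel_def refl_on_def)

lemma K_relpow_coded_graph: "K {t. (pfst (psnd t), psnd (psnd t)) \<in> coded_graph n (pfst t) ^^ k}"
proof (induction k)
  case 0
  show ?case
    by (rule K_rec_pred) (simp, intro rec_fun_intros)
next
  case (Suc k)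
  let ?Q = "{t. (pfst (psnd t), psnd (psnd t)) \<in> coded_graph n (pfst t) ^^ k}"
  let ?edge = "\<lambda>t i j. prod_encode (pfst (pfst t), prod_encode (psnd (pfst t), prod_encode (i, j)))"
  let ?A = "\<lambda>m. {t. prod_encode (pfst t, prod_encode (pfst (psnd t), m)) \<in> ?Q} \<inter>
     ({t. m < n \<and> psnd (psnd t) < n} \<inter>
      ({t. ?edge t m (psnd (psnd t)) \<in> W} \<union> {t. ?edge t (psnd (psnd t)) m \<in> W}))"
  have "K (?A m)" for m
    by (intro K_Int K_Un K_vimage[OF Suc.IH] K_vimage[OF K_W] K_rec_pred;
        (simp only: mem_Collect_eq)?; intro rec_fun_intros)
  then have "K (\<Union>m<n. ?A m)"
    by (rule K_UN)
  moreover have "{t. (pfst (psnd t), psnd (psnd t)) \<in> coded_graph n (pfst t) ^^ Suc k} = (\<Union>m<n. ?A m)"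
  proof (intro set_eqI iffI)
    fix t
    assume "t \<in> {t. (pfst (psnd t), psnd (psnd t)) \<in> coded_graph n (pfst t) ^^ Suc k}"
    then obtain m where m: "(pfst (psnd t), m) \<in> coded_graph n (pfst t) ^^ k"
      "(m, psnd (psnd t)) \<in> coded_graph n (pfst t)"
      by auto
    then show "t \<in> (\<Union>m<n. ?A m)"
      unfolding coded_graph_def coded_edge_def by auto
  next
    fix t
    assume "t \<in> (\<Union>m<n. ?A m)"
    then obtain m where "m < n" "t \<in> ?A m"
      by blast
    then have "(pfst (psnd t), m) \<in> coded_graph n (pfst t) ^^ k" "(m, psnd (psnd t)) \<in> coded_graph n (pfst t)"
      unfolding coded_graph_def coded_edge_def by auto
    then show "t \<in> {t. (pfst (psnd t), psnd (psnd t)) \<in> coded_graph n (pfst t) ^^ Suc k}"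
      by auto
  qed
  ultimately show ?case
    by simp
qed

lemma K_graph_eqrel: "K (prod_encode ` graph_eqrel n)"
proof -
  let ?D = "\<lambda>k. {z. pfst (pfst z) = pfst (psnd z)} \<inter>
    {z. prod_encode (pfst (pfst z), prod_encode (psnd (pfst z), psnd (psnd z))) \<in>
        {t. (pfst (psnd t), psnd (psnd t)) \<in> coded_graph n (pfst t) ^^ k}}"
  have "K (?D k)" for k
    by (intro K_Int K_vimage[OF K_relpow_coded_graph] K_rec_pred; (simp only: mem_Collect_eq)?;
        intro rec_fun_intros)
  then have "K (\<Union>k<Suc (n * n). ?D k)"
    by (intro K_UN)
  moreover have "prod_encode ` graph_eqrel n = (\<Union>k<Suc (n * n). ?D k)"
    unfolding prod_encode_image graph_eqrel_def
    using rtrancl_iff_relpow_bounded[OF coded_graph_subset] by auto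
  ultimately show ?thesis
    by simp
qed

lemma graph_eqrel_small:
  assumes "(y, y') \<in> graph_eqrel n" "y \<noteq> y'"
  shows "pfst y = pfst y' \<and> psnd y < n \<and> psnd y' < n"
proof -
  have fst: "pfst y = pfst y'" and path: "(psnd y, psnd y') \<in> (coded_graph n (pfst y))\<^sup>*"
    using assms(1) unfolding graph_eqrel_def by auto
  moreover have "psnd y \<noteq> psnd y'"
    using assms(2) fst prod_encode_pfst_psnd by metis
  ultimately show ?thesis
    using coded_graph_subset by (metis converse_rtranclE rtranclE mem_Sigma_iff atLeastLessThan_iff subsetD)
qed

text \<open>An \<open>n\<close>-tuple \<open>xs\<close> is sent to \<open>(c, 0), \<dots>, (c, n - 1)\<close>, where \<open>c\<close> pairs an index \<open>e\<close>
of \<open>F\<close> (read on pairs of entries of a coded tuple) with the code of \<open>xs\<close>: the graph coded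
by \<open>c\<close> is then the restriction of \<open>F\<close> to the entries of \<open>xs\<close>.\<close>

lemma nary_reducible_graph_eqrel:
  assumes F: "equiv UNIV F" "K (prod_encode ` F)"
  shows "nary_reducible n F (graph_eqrel n)"
proof -
  let ?h = "\<lambda>z. prod_encode (code_nth (pfst z) (pfst (psnd z)), code_nth (pfst z) (psnd (psnd z)))"
  have "rec_fun ?h"
    by (intro rec_fun_intros)
  with F(2) have "K {z. ?h z \<in> prod_encode ` F}"
    by (rule K_vimage)
  then obtain e where e: "\<And>z. ?h z \<in> prod_encode ` F \<longleftrightarrow> prod_encode (e, z) \<in> W"
    using K_universal by blast
  let ?g = "\<lambda>i xs. prod_encode (prod_encode (e, list_code xs), i)"
  show ?thesis
    unfolding nary_reducible_def
  proof (intro exI[of _ ?g] conjI allI impI)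
    show "recfn n (?g i)" for i
      by (rule recfn_comp_rec_fun2[OF rec_fun2_prod_encode recfn_comp_rec_fun2[OF rec_fun2_prod_encode
            recfn_const recfn_list_code] recfn_const])
  next
    fix xs :: "nat list" and i j
    assume xs: "length xs = n" and ij: "i < j \<and> j < n"
    let ?c = "prod_encode (e, list_code xs)"
    have "coded_edge ?c a b \<longleftrightarrow> (xs ! a, xs ! b) \<in> F" if "a < n" "b < n" for a b
      using e[of "prod_encode (list_code xs, prod_encode (a, b))"] that xs inj_prod_encode
      by (simp add: coded_edge_def inj_on_def image_iff)
    then have graph: "coded_graph n ?c = {(a, b). a < n \<and> b < n \<and> (xs ! a, xs ! b) \<in> F}"
      using F(1) unfolding coded_graph_def equiv_def sym_def by auto
    have "(i, j) \<in> (coded_graph n ?c)\<^sup>* \<longleftrightarrow> (xs ! i, xs ! j) \<in> F"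
    proof
      assume "(i, j) \<in> (coded_graph n ?c)\<^sup>*"
      then show "(xs ! i, xs ! j) \<in> F"
        using F(1) unfolding equiv_def refl_on_def trans_def
        by (induction rule: rtrancl_induct) (auto simp: graph)
    next
      assume "(xs ! i, xs ! j) \<in> F"
      then show "(i, j) \<in> (coded_graph n ?c)\<^sup>*"
        using ij by (auto simp: graph)
    qed
    then show "(xs ! i, xs ! j) \<in> F \<longleftrightarrow> (?g i xs, ?g j xs) \<in> graph_eqrel n"
      unfolding graph_eqrel_def by simp
  qed
qed

end

lemma universal_class_Sigma0: "universal_class (Sigma0 (Suc p)) (univ_Sigma p)"
proof unfold_locales
  show "Sigma0 (Suc p) (univ_Sigma p)"
    using univ_Sigma_universal by blast
  show "\<exists>e. \<forall>x. x \<in> A \<longleftrightarrow> prod_encode (e, x) \<in> univ_Sigma p" if "Sigma0 (Suc p) A" for A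
    using univ_Sigma_universal that by blast
qed (auto intro: Sigma0_vimage Sigma0_Un Sigma0_Int Sigma0_rec_pred)

lemma universal_class_Pi0: "universal_class (Pi0 (Suc p)) (- univ_Sigma p)"
proof unfold_locales
  show "Pi0 (Suc p) (- univ_Sigma p)"
    unfolding Pi0_def using univ_Sigma_universal by simp
  fix A
  assume "Pi0 (Suc p) A"
  then obtain e where "\<And>x. x \<in> - A \<longleftrightarrow> prod_encode (e, x) \<in> univ_Sigma p"
    unfolding Pi0_def using univ_Sigma_universal by blast
  then show "\<exists>e. \<forall>x. x \<in> A \<longleftrightarrow> prod_encode (e, x) \<in> - univ_Sigma p"
    by auto
qed (auto intro: Pi0_vimage Pi0_Un Pi0_Int Pi0_rec_pred)

section \<open>No relation with small classes is complete under \<open>(n+1)\<close>-ary reducibility\<close>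

lemma no_large_class:
  assumes small: "\<And>y y'. (y, y') \<in> E \<Longrightarrow> y \<noteq> y' \<Longrightarrow> pfst y = pfst y' \<and> psnd y < n \<and> psnd y' < n"
    and ys: "\<And>a b. a < b \<Longrightarrow> b \<le> n \<Longrightarrow> ys a \<noteq> ys b \<and> (ys a, ys b) \<in> E"
    and n: "1 \<le> n"
  shows False
proof -
  have "psnd (ys k) < n" if "k \<le> n" for k
  proof (cases "k = 0")
    case True
    then show ?thesis using small ys[of 0 n] n by auto
  next
    case False
    then show ?thesis using small ys[of 0 k] that by auto
  qed
  then have "(\<lambda>k. psnd (ys k)) ` {0..n} \<subseteq> {0..<n}"
    by auto
  moreover have "inj_on (\<lambda>k. psnd (ys k)) {0..n}"
  proof (rule inj_onI)
    fix a b
    assume ab: "a \<in> {0..n}" "b \<in> {0..n}" "psnd (ys a) = psnd (ys b)"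
    have "pfst (ys a) \<noteq> pfst (ys b) \<or> psnd (ys a) \<noteq> psnd (ys b)" if "ys a \<noteq> ys b" for a b
      using that prod_encode_pfst_psnd by metis
    then have "ys a \<noteq> ys b \<and> psnd (ys a) \<noteq> psnd (ys b)" if "a < b" "b \<le> n" for a b
      using ys[OF that] small[of "ys a" "ys b"] by blast
    then show "a = b"
      using ab by (cases a b rule: linorder_cases) fastforce+
  qed
  ultimately have "card {0..n} \<le> card {0..<n}"
    by (intro card_inj_on_le) auto
  then show False
    by simp
qed

text \<open>If all \<open>n + 1\<close> images are distinct, they form a class that is too large; if two
coincide, the relation is forced to hold after all.\<close>

lemma diagonal_contradiction:
  assumes small: "\<And>y y'. (y, y') \<in> E \<Longrightarrow> y \<noteq> y' \<Longrightarrow> pfst y = pfst y' \<and> psnd y < n \<and> psnd y' < n"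
    and refl: "\<And>y. (y, y) \<in> E" and n: "1 \<le> n"
    and red: "\<And>a b. a < b \<Longrightarrow> b \<le> n \<Longrightarrow> P \<longleftrightarrow> (ys a, ys b) \<in> E"
    and P: "P \<longleftrightarrow> (\<forall>b\<le>n. \<forall>a<b. ys a \<noteq> ys b)"
  shows False
proof (cases P)
  case True
  have "ys a \<noteq> ys b \<and> (ys a, ys b) \<in> E" if "a < b" "b \<le> n" for a b
    using True P red[OF that] that by blast
  from no_large_class[OF small this n] show False .
next
  case False
  then obtain a b where "a < b" "b \<le> n" "ys a = ys b"
    using P by blast
  then show False
    using red[of a b] refl False by simp
qed

definition diag_rel :: "nat \<Rightarrow> (nat \<Rightarrow> bool) \<Rightarrow> (nat \<times> nat) set" where
  "diag_rel n P = {(u, v). u = v \<or> (pfst u = pfst v \<and> psnd u \<le> n \<and> psnd v \<le> n \<and> P (pfst u))}"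

lemma equiv_diag_rel: "equiv UNIV (diag_rel n P)"
  unfolding diag_rel_def by (rule equivI) (auto simp: refl_on_def sym_def trans_def)

lemma diag_rel_column:
  "a < b \<Longrightarrow> b \<le> n \<Longrightarrow> (prod_encode (e, a), prod_encode (e, b)) \<in> diag_rel n P \<longleftrightarrow> P e"
  unfolding diag_rel_def by auto

lemma Sigma1_diag_rel: "Sigma0 1 {e. P e} \<Longrightarrow> Sigma0 1 (prod_encode ` diag_rel n P)"
proof -
  let ?A = "{z. pfst z = psnd z} \<union>
    ({z. pfst (pfst z) = pfst (psnd z) \<and> psnd (pfst z) \<le> n \<and> psnd (psnd z) \<le> n} \<inter> {z. pfst (pfst z) \<in> {e. P e}})"
  assume P: "Sigma0 1 {e. P e}"
  have "Sigma0 1 ?A"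
    by (intro Sigma0_Un Sigma0_Int Sigma0_vimage[OF P] Sigma0_rec_pred; (simp only: mem_Collect_eq)?;
        intro rec_fun_intros)
  moreover have "prod_encode ` diag_rel n P = ?A"
    unfolding prod_encode_image diag_rel_def by auto
  ultimately show ?thesis
    by simp
qed

lemma Pi1_diag_rel: "Sigma0 1 {e. \<not> P e} \<Longrightarrow> Pi0 1 (prod_encode ` diag_rel n P)"
proof -
  let ?A = "{z. pfst z \<noteq> psnd z} \<inter>
    ({z. pfst (pfst z) \<noteq> pfst (psnd z) \<or> n < psnd (pfst z) \<or> n < psnd (psnd z)} \<union> {z. pfst (pfst z) \<in> {e. \<not> P e}})"
  assume P: "Sigma0 1 {e. \<not> P e}"
  have "Sigma0 1 ?A"
    by (intro Sigma0_Un Sigma0_Int Sigma0_vimage[OF P] Sigma0_rec_pred; (simp only: mem_Collect_eq)?;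
        intro rec_fun_intros)
  moreover have "- prod_encode ` diag_rel n P = ?A"
    unfolding prod_encode_image diag_rel_def by auto
  ultimately show ?thesis
    unfolding Pi0_def by simp
qed

text \<open>On input \<open>e\<close> the diagonal reads the column \<open>diag_input n e = ((e, 0), \<dots>, (e, n))\<close>
and interprets the \<open>k\<close>-th entry of \<open>e\<close> as a \<open>\<Sigma>\<^sup>0\<^sub>1\<close> index of the graph of the \<open>k\<close>-th
component of a reduction; \<open>diag_graph n e vs\<close> says that \<open>vs\<close> lists the values of these
components on the column.\<close>

definition diag_input :: "nat \<Rightarrow> nat \<Rightarrow> nat list" where
  "diag_input n e = map (\<lambda>k. prod_encode (e, k)) [0..<Suc n]"

definition diag_graph :: "nat \<Rightarrow> nat \<Rightarrow> nat \<Rightarrow> bool" where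
  "diag_graph n e vs \<longleftrightarrow>
     (\<forall>k<Suc n. prod_encode (code_nth e k, prod_encode (list_code (diag_input n e), code_nth vs k)) \<in> univ_Sigma1)"

definition diag_injective :: "nat \<Rightarrow> nat \<Rightarrow> bool" where
  "diag_injective n e \<longleftrightarrow> (\<exists>vs. diag_graph n e vs \<and> (\<forall>b<Suc n. \<forall>a<b. code_nth vs a \<noteq> code_nth vs b))"

definition diag_collision :: "nat \<Rightarrow> nat \<Rightarrow> bool" where
  "diag_collision n e \<longleftrightarrow> (\<exists>vs. diag_graph n e vs \<and> (\<exists>b<Suc n. \<exists>a<b. code_nth vs a = code_nth vs b))"

interpretation Sigma1: universal_class "Sigma0 1" univ_Sigma1
  using universal_class_Sigma0[of 0] by simp

lemma rec_fun_list_code_map: "(\<And>k. k \<in> set ks \<Longrightarrow> rec_fun (f k)) \<Longrightarrow> rec_fun (\<lambda>x. list_code (map (\<lambda>k. f k x) ks))"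
  by (induction ks) (simp_all add: rec_fun_const rec_fun_code_Cons)

lemma Sigma1_diag_graph: "Sigma0 1 {w. diag_graph n (pfst w) (psnd w)}"
proof -
  have "rec_fun (\<lambda>x. list_code (diag_input n x))"
    unfolding diag_input_def by (rule rec_fun_list_code_map) (intro rec_fun_intros)
  from rec_fun_comp[OF this rec_fun_pfst[OF rec_fun_id]]
  have "Sigma0 1 (\<Inter>k<Suc n. {w. prod_encode (code_nth (pfst w) k,
      prod_encode (list_code (diag_input n (pfst w)), code_nth (psnd w) k)) \<in> univ_Sigma1})"
    by (intro Sigma1.K_INT Sigma1.K_vimage[OF Sigma1.K_W] rec_fun_prod_encode rec_fun_code_nth
        rec_fun_pfst rec_fun_psnd rec_fun_id rec_fun_const)
  moreover have "(\<Inter>k<Suc n. {w. prod_encode (code_nth (pfst w) k,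
      prod_encode (list_code (diag_input n (pfst w)), code_nth (psnd w) k)) \<in> univ_Sigma1})
      = {w. diag_graph n (pfst w) (psnd w)}"
    unfolding diag_graph_def by auto
  ultimately show ?thesis
    by simp
qed

lemma Sigma1_diag_injective: "Sigma0 1 {e. diag_injective n e}"
proof -
  have "Sigma0 1 ({w. diag_graph n (pfst w) (psnd w)} \<inter>
      {w. \<forall>b<Suc n. \<forall>a<b. code_nth (psnd w) a \<noteq> code_nth (psnd w) b})"
    by (intro Sigma0_Int Sigma1_diag_graph Sigma0_rec_pred) (simp only: mem_Collect_eq, intro rec_fun_intros)
  from Sigma0_Suc_project[OF this[unfolded One_nat_def]] show ?thesis
    unfolding diag_injective_def by simp
qed

lemma Sigma1_diag_collision: "Sigma0 1 {e. diag_collision n e}"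
proof -
  have "Sigma0 1 ({w. diag_graph n (pfst w) (psnd w)} \<inter>
      {w. \<exists>b<Suc n. \<exists>a<b. code_nth (psnd w) a = code_nth (psnd w) b})"
    by (intro Sigma0_Int Sigma1_diag_graph Sigma0_rec_pred) (simp only: mem_Collect_eq, intro rec_fun_intros)
  from Sigma0_Suc_project[OF this[unfolded One_nat_def]] show ?thesis
    unfolding diag_collision_def by simp
qed

lemma rec_fun_recfn_code: "recfn k G \<Longrightarrow> rec_fun (\<lambda>z. G (map (code_nth z) [0..<k]))"
  using rf_comp[of k G 1 "\<lambda>i xs. code_nth (hd xs) i"] rec_fun_code_nth[OF rec_fun_id rec_fun_const]
  unfolding rec_fun_def by simp

text \<open>By Kleene's normal form every recursive function has a graph in \<open>\<Sigma>\<^sup>0\<^sub>1\<close>, so any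
\<open>(n+1)\<close>-tuple of recursive functions has an index \<open>e\<close> of its graphs; on the column
\<open>diag_input n e\<close>, injectivity and collision are then decided by the actual values.\<close>

lemma diag_index:
  assumes g: "\<And>k. k < Suc n \<Longrightarrow> recfn (Suc n) (g k)"
  obtains e where
    "diag_injective n e \<longleftrightarrow> (\<forall>b\<le>n. \<forall>a<b. g a (diag_input n e) \<noteq> g b (diag_input n e))"
    "diag_collision n e \<longleftrightarrow> \<not> (\<forall>b\<le>n. \<forall>a<b. g a (diag_input n e) \<noteq> g b (diag_input n e))"
proof -
  let ?G = "\<lambda>k. {z. g k (map (code_nth (pfst z)) [0..<Suc n]) = psnd z}"
  have "Sigma0 1 (?G k)" if "k < Suc n" for k
  proof (rule Sigma0_rec_pred)
    have "rec_fun (\<lambda>z. g k (map (code_nth (pfst z)) [0..<Suc n]))"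
      using rec_fun_comp[OF rec_fun_recfn_code[OF g[OF that]] rec_fun_pfst[OF rec_fun_id]] .
    then show "rec_pred (\<lambda>z. z \<in> ?G k)"
      by (simp only: mem_Collect_eq) (intro rec_pred_eq rec_fun_psnd rec_fun_id)
  qed
  then have "\<forall>k. \<exists>e. k < Suc n \<longrightarrow> (\<forall>z. z \<in> ?G k \<longleftrightarrow> prod_encode (e, z) \<in> univ_Sigma1)"
    by (meson univ_Sigma1_universal)
  then obtain es where es: "\<And>k z. k < Suc n \<Longrightarrow> z \<in> ?G k \<longleftrightarrow> prod_encode (es k, z) \<in> univ_Sigma1"
    by metis
  define e where "e = list_code (map es [0..<Suc n])"
  let ?ys = "\<lambda>k. g k (diag_input n e)"
  have input: "map (code_nth (list_code (diag_input n e))) [0..<Suc n] = diag_input n e"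
    by (rule nth_equalityI) (simp_all add: diag_input_def del: upt_Suc)
  have "code_nth e k = es k" if "k < Suc n" for k
    using that unfolding e_def by (simp del: upt_Suc)
  then have "diag_graph n e vs \<longleftrightarrow>
      (\<forall>k<Suc n. g k (map (code_nth (list_code (diag_input n e))) [0..<Suc n]) = code_nth vs k)" for vs
    unfolding diag_graph_def by (simp add: es[symmetric] del: upt_Suc)
  then have graph: "diag_graph n e vs \<longleftrightarrow> (\<forall>k<Suc n. ?ys k = code_nth vs k)" for vs
    by (simp only: input)
  have by_values: "(\<exists>vs. diag_graph n e vs \<and> Q (code_nth vs)) \<longleftrightarrow> Q ?ys"
    if cong: "\<And>f f'. (\<And>k. k \<le> n \<Longrightarrow> f k = f' k) \<Longrightarrow> Q f \<longleftrightarrow> Q f'" for Q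
  proof
    assume "\<exists>vs. diag_graph n e vs \<and> Q (code_nth vs)"
    then obtain vs where vs: "\<forall>k<Suc n. ?ys k = code_nth vs k" and "Q (code_nth vs)"
      unfolding graph by blast
    moreover have "Q ?ys \<longleftrightarrow> Q (code_nth vs)"
      by (rule cong) (use vs in auto)
    ultimately show "Q ?ys"
      by blast
  next
    let ?vs = "list_code (map ?ys [0..<Suc n])"
    have values_vs: "?ys k = code_nth ?vs k" if "k < Suc n" for k
      using that by (simp del: upt_Suc)
    assume "Q ?ys"
    moreover have "Q ?ys \<longleftrightarrow> Q (code_nth ?vs)"
      by (rule cong) (simp del: upt_Suc)
    ultimately have "diag_graph n e ?vs \<and> Q (code_nth ?vs)"
      unfolding graph using values_vs by blast
    then show "\<exists>vs. diag_graph n e vs \<and> Q (code_nth vs)" ..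
  qed
  have "diag_injective n e \<longleftrightarrow> (\<forall>b\<le>n. \<forall>a<b. ?ys a \<noteq> ?ys b)"
    unfolding diag_injective_def less_Suc_eq_le
    by (rule by_values[where Q = "\<lambda>f. \<forall>b\<le>n. \<forall>a<b. f a \<noteq> f b"]) simp
  moreover have "diag_collision n e \<longleftrightarrow> (\<exists>b\<le>n. \<exists>a<b. ?ys a = ?ys b)"
    unfolding diag_collision_def less_Suc_eq_le
  proof (rule by_values[where Q = "\<lambda>f. \<exists>b\<le>n. \<exists>a<b. f a = f b"])
    fix f f' :: "nat \<Rightarrow> nat"
    assume "\<And>k. k \<le> n \<Longrightarrow> f k = f' k"
    then have "f a = f b \<longleftrightarrow> f' a = f' b" if "a < b" "b \<le> n" for a b
      using that by simp
    then show "(\<exists>b\<le>n. \<exists>a<b. f a = f b) \<longleftrightarrow> (\<exists>b\<le>n. \<exists>a<b. f' a = f' b)"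
      by blast
  qed
  ultimately show ?thesis
    by (intro that) auto
qed

lemma not_nary_reducible_diag_rel:
  assumes small: "\<And>y y'. (y, y') \<in> E \<Longrightarrow> y \<noteq> y' \<Longrightarrow> pfst y = pfst y' \<and> psnd y < n \<and> psnd y' < n"
    and refl: "\<And>y. (y, y) \<in> E" and n: "1 \<le> n"
    and P: "P = diag_injective n \<or> P = (\<lambda>e. \<not> diag_collision n e)"
  shows "\<not> nary_reducible (n + 1) (diag_rel n P) E"
proof
  assume "nary_reducible (n + 1) (diag_rel n P) E"
  then obtain g where g: "\<And>k. k < n + 1 \<Longrightarrow> recfn (n + 1) (g k)"
    and red: "\<And>xs a b. length xs = n + 1 \<Longrightarrow> a < b \<Longrightarrow> b < n + 1 \<Longrightarrow>
      (xs ! a, xs ! b) \<in> diag_rel n P \<longleftrightarrow> (g a xs, g b xs) \<in> E"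
    unfolding nary_reducible_def by blast
  have g': "\<And>k. k < Suc n \<Longrightarrow> recfn (Suc n) (g k)"
    using g by simp
  obtain e where e:
    "diag_injective n e \<longleftrightarrow> (\<forall>b\<le>n. \<forall>a<b. g a (diag_input n e) \<noteq> g b (diag_input n e))"
    "diag_collision n e \<longleftrightarrow> \<not> (\<forall>b\<le>n. \<forall>a<b. g a (diag_input n e) \<noteq> g b (diag_input n e))"
    by (rule diag_index[OF g'])
  have len: "length (diag_input n e) = n + 1"
    by (simp add: diag_input_def)
  have entry: "diag_input n e ! k = prod_encode (e, k)" if "k \<le> n" for k
    using that by (simp add: diag_input_def del: upt_Suc)
  show False
  proof (rule diagonal_contradiction[OF small refl n])
    fix a b
    assume ab: "a < b" "b \<le> n"
    have "P e \<longleftrightarrow> (diag_input n e ! a, diag_input n e ! b) \<in> diag_rel n P"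
      using ab entry diag_rel_column[OF ab] by simp
    also have "\<dots> \<longleftrightarrow> (g a (diag_input n e), g b (diag_input n e)) \<in> E"
      using ab by (intro red len) simp_all
    finally show "P e \<longleftrightarrow> (g a (diag_input n e), g b (diag_input n e)) \<in> E" .
  next
    from P show "P e \<longleftrightarrow> (\<forall>b\<le>n. \<forall>a<b. g a (diag_input n e) \<noteq> g b (diag_input n e))"
    proof
      assume "P = diag_injective n"
      then show ?thesis using e(1) by simp
    next
      assume "P = (\<lambda>e. \<not> diag_collision n e)"
      then show ?thesis using e(2) by simp
    qed
  qed
qed

section \<open>The computable case\<close>

definition min_eqrel :: "nat \<Rightarrow> (nat \<times> nat) set" where
  "min_eqrel n = {(x, y). min x (n - 1) = min y (n - 1)}"

lemma equiv_min_eqrel: "equiv UNIV (min_eqrel n)"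
  unfolding min_eqrel_def by (rule equivI) (auto simp: refl_on_def sym_def trans_def)

lemma rec_pred_min_eqrel: "rec_pred (\<lambda>z. z \<in> prod_encode ` min_eqrel n)"
proof -
  have "min x m = x - (x - m)" for x m :: nat
    by simp
  then show ?thesis
    unfolding prod_encode_image min_eqrel_def by (simp only: mem_Collect_eq case_prod_conv) (intro rec_fun_intros)
qed

lemma rec_pred_Id: "rec_pred (\<lambda>z. z \<in> prod_encode ` Id)"
  unfolding prod_encode_image by (simp, intro rec_fun_intros)

lemma Sigma_Pi_eqrel_0: "equiv UNIV E \<Longrightarrow> rec_pred (\<lambda>z. z \<in> prod_encode ` E) \<Longrightarrow> Sigma_eqrel 0 E \<and> Pi_eqrel 0 E"
  unfolding Sigma_eqrel_def Pi_eqrel_def Pi0_def Sigma0_0_iff using rec_pred_not by fastforce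

lemma rec_pred_if_eqrel_0:
  "Sigma_eqrel 0 F \<or> Pi_eqrel 0 F \<Longrightarrow> rec_pred (\<lambda>z. (pfst z, psnd z) \<in> F)"
  unfolding Sigma_eqrel_def Pi_eqrel_def Pi0_def Sigma0_0_iff prod_encode_image
  using rec_pred_not by fastforce

text \<open>Each entry of the tuple is sent to the least index of an equivalent entry.\<close>

lemma nary_reducible_min_eqrel:
  assumes F: "equiv UNIV F" and dec: "rec_pred (\<lambda>z. (pfst z, psnd z) \<in> F)"
  shows "nary_reducible n F (min_eqrel n)"
proof -
  have refl: "(a, a) \<in> F" for a
    using F unfolding equiv_def refl_on_def by blast
  have sym: "(a, b) \<in> F \<Longrightarrow> (b, a) \<in> F" for a b
    using F unfolding equiv_def sym_def by blast
  have trans: "(a, b) \<in> F \<Longrightarrow> (b, c) \<in> F \<Longrightarrow> (a, c) \<in> F" for a b c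
    using F unfolding equiv_def trans_def by blast
  define lab where "lab i d = (LEAST j. (if (code_nth d j, code_nth d i) \<in> F then 0 else 1) = (0::nat))" for i d
  have lab: "lab i d = (LEAST j. (code_nth d j, code_nth d i) \<in> F)" for i d
    unfolding lab_def by simp
  have lab_le: "lab k d \<le> k" for k d
    unfolding lab by (rule Least_le) (rule refl)
  have lab_F: "(code_nth d (lab k d), code_nth d k) \<in> F" for k d
    unfolding lab by (rule LeastI[of _ k]) (rule refl)
  have "rec_fun (lab i)" for i
    unfolding lab_def
  proof (rule rec_fun_Least)
    have "rec_fun (\<lambda>w. prod_encode (code_nth (pfst w) (psnd w), code_nth (pfst w) i))"
      by (intro rec_fun_intros)
    from rec_pred_comp[OF dec this]
    have "rec_pred (\<lambda>w. (code_nth (pfst w) (psnd w), code_nth (pfst w) i) \<in> F)"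
      by simp
    then show "rec_fun (\<lambda>w. if (code_nth (pfst w) (psnd w), code_nth (pfst w) i) \<in> F then 0 else 1)"
      by (intro rec_fun_If rec_fun_const)
  qed (use refl in auto)
  then have "recfn n (\<lambda>xs. lab i (list_code xs))" for i
    by (rule recfn_comp_rec_fun[OF _ recfn_list_code])
  moreover have "(xs ! i, xs ! j) \<in> F \<longleftrightarrow> (lab i (list_code xs), lab j (list_code xs)) \<in> min_eqrel n"
    if xs: "length xs = n" and ij: "i < j" "j < n" for xs i j
  proof -
    have nth: "code_nth (list_code xs) k = xs ! k" if "k < n" for k
      using that xs by simp
    have lab_F_xs: "(xs ! lab k (list_code xs), xs ! k) \<in> F" if "k < n" for k
      using lab_F[of "list_code xs" k] lab_le[of k "list_code xs"] that by (simp add: nth)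
    have "lab i (list_code xs) < n" "lab j (list_code xs) < n"
      using lab_le[of i "list_code xs"] lab_le[of j "list_code xs"] ij by linarith+
    then have "(lab i (list_code xs), lab j (list_code xs)) \<in> min_eqrel n \<longleftrightarrow>
        lab i (list_code xs) = lab j (list_code xs)"
      unfolding min_eqrel_def by auto
    also have "\<dots> \<longleftrightarrow> (xs ! i, xs ! j) \<in> F"
    proof
      assume eq: "lab i (list_code xs) = lab j (list_code xs)"
      have "(xs ! lab i (list_code xs), xs ! i) \<in> F" "(xs ! lab i (list_code xs), xs ! j) \<in> F"
        using lab_F_xs[of i] lab_F_xs[of j] ij by (simp_all add: eq)
      then show "(xs ! i, xs ! j) \<in> F"
        by (rule trans[OF sym])
    next
      assume ij_F: "(xs ! i, xs ! j) \<in> F"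
      let ?d = "list_code xs"
      have same_class: "(code_nth ?d k, code_nth ?d i) \<in> F \<longleftrightarrow> (code_nth ?d k, code_nth ?d j) \<in> F"
        if "k < n" for k
      proof -
        have "(xs ! k, xs ! i) \<in> F \<longleftrightarrow> (xs ! k, xs ! j) \<in> F"
          using trans[OF _ ij_F] trans[OF _ sym[OF ij_F]] by (rule iffI)
        then show ?thesis
          using that ij by (simp add: nth)
      qed
      have "(code_nth ?d (lab i ?d), code_nth ?d j) \<in> F"
        using same_class[OF \<open>lab i ?d < n\<close>] lab_F[of ?d i] by simp
      then have "lab j ?d \<le> lab i ?d"
        unfolding lab[of j] by (rule Least_le)
      moreover have "(code_nth ?d (lab j ?d), code_nth ?d i) \<in> F"
        using same_class[OF \<open>lab j ?d < n\<close>] lab_F[of ?d j] by simp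
      then have "lab i ?d \<le> lab j ?d"
        unfolding lab[of i] by (rule Least_le)
      ultimately show "lab i ?d = lab j ?d"
        by simp
    qed
    finally show ?thesis ..
  qed
  ultimately show ?thesis
    unfolding nary_reducible_def by (intro exI[of _ "\<lambda>i xs. lab i (list_code xs)"] conjI allI impI) auto
qed

lemma not_nary_reducible_Id_min_eqrel: "1 \<le> n \<Longrightarrow> \<not> nary_reducible (n + 1) Id (min_eqrel n)"
proof
  assume "1 \<le> n" and "nary_reducible (n + 1) Id (min_eqrel n)"
  from this(2) obtain g where g: "\<forall>xs :: nat list. length xs = n + 1 \<longrightarrow> (\<forall>i j. i < j \<and> j < n + 1 \<longrightarrow>
      (xs ! i, xs ! j) \<in> Id \<longleftrightarrow> (g i xs, g j xs) \<in> min_eqrel n)"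
    unfolding nary_reducible_def by blast
  let ?m = "\<lambda>k. min (g k [0..<n + 1]) (n - 1)"
  have ne: "?m a \<noteq> ?m b" if "a < b" "b \<le> n" for a b
    using g[rule_format, of "[0..<n + 1]" a b] that unfolding min_eqrel_def by (simp del: upt_Suc)
  have "inj_on ?m {0..n}"
  proof (rule inj_onI)
    fix a b
    assume "a \<in> {0..n}" "b \<in> {0..n}" "?m a = ?m b"
    then show "a = b"
      using ne[of a b] ne[of b a] by (cases a b rule: linorder_cases) auto
  qed
  moreover have "?m ` {0..n} \<subseteq> {0..<n}"
    using \<open>1 \<le> n\<close> by auto
  ultimately have "card {0..n} \<le> card {0..<n}"
    by (intro card_inj_on_le) auto
  then show False
    by simp
qed

lemma complete_under_strictI:
  assumes "C E" "\<And>F. C F \<Longrightarrow> nary_reducible n F E" "C F0" "\<not> nary_reducible (n + 1) F0 E"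
  shows "\<exists>E. complete_under n C E \<and> \<not> complete_under (n + 1) C E"
  using assms unfolding complete_under_def by blast

lemma strict_completeness_computable:
  assumes n: "1 \<le> n" and C: "C = Sigma_eqrel 0 \<or> C = Pi_eqrel 0"
  shows "\<exists>E. complete_under n C E \<and> \<not> complete_under (n + 1) C E"
proof (rule complete_under_strictI)
  show "C (min_eqrel n)"
    using Sigma_Pi_eqrel_0[OF equiv_min_eqrel rec_pred_min_eqrel] C by auto
  have "equiv UNIV Id"
    by (rule equivI) (simp_all add: refl_Id sym_Id trans_Id)
  from Sigma_Pi_eqrel_0[OF this rec_pred_Id] show "C Id"
    using C by auto
  show "nary_reducible n F (min_eqrel n)" if "C F" for F
    using that C rec_pred_if_eqrel_0[of F]
    by (intro nary_reducible_min_eqrel) (auto simp: Sigma_eqrel_def Pi_eqrel_def)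
  show "\<not> nary_reducible (n + 1) Id (min_eqrel n)"
    by (rule not_nary_reducible_Id_min_eqrel[OF n])
qed

lemma (in universal_class) strict_completeness:
  assumes n: "1 \<le> n" and P: "P = diag_injective n \<or> P = (\<lambda>e. \<not> diag_collision n e)"
    and diag: "K (prod_encode ` diag_rel n P)"
  shows "\<exists>E. complete_under n (\<lambda>F. equiv UNIV F \<and> K (prod_encode ` F)) E
    \<and> \<not> complete_under (n + 1) (\<lambda>F. equiv UNIV F \<and> K (prod_encode ` F)) E"
proof (rule complete_under_strictI)
  show "equiv UNIV (graph_eqrel n) \<and> K (prod_encode ` graph_eqrel n)"
    using equiv_graph_eqrel K_graph_eqrel by blast
  show "nary_reducible n F (graph_eqrel n)" if "equiv UNIV F \<and> K (prod_encode ` F)" for F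
    using that nary_reducible_graph_eqrel by blast
  show "equiv UNIV (diag_rel n P) \<and> K (prod_encode ` diag_rel n P)"
    using equiv_diag_rel diag by blast
  show "\<not> nary_reducible (n + 1) (diag_rel n P) (graph_eqrel n)"
  proof (rule not_nary_reducible_diag_rel[OF _ _ n P])
    show "(y, y) \<in> graph_eqrel n" for y
      by (simp add: graph_eqrel_def)
  qed (rule graph_eqrel_small)
qed

theorem theorem4p11:
  fixes p n :: nat
  assumes "n \<ge> 2"
  shows "(\<exists>E. complete_under n (Sigma_eqrel p) E \<and> \<not> complete_under (n + 1) (Sigma_eqrel p) E)
       \<and> (\<exists>E. complete_under n (Pi_eqrel p) E \<and> \<not> complete_under (n + 1) (Pi_eqrel p) E)"
proof -
  have n: "1 \<le> n"
    using assms by simp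
  show ?thesis
  proof (cases p)
    case 0
    then show ?thesis
      using strict_completeness_computable[OF n] by blast
  next
    case (Suc q)
    interpret Sigma: universal_class "Sigma0 (Suc q)" "univ_Sigma q"
      by (rule universal_class_Sigma0)
    interpret Pi: universal_class "Pi0 (Suc q)" "- univ_Sigma q"
      by (rule universal_class_Pi0)
    have "Sigma0 (Suc q) (prod_encode ` diag_rel n (diag_injective n))"
      using Sigma0_mono[OF Sigma1_diag_rel[OF Sigma1_diag_injective], of "Suc q"] by simp
    from Sigma.strict_completeness[OF n _ this] have "\<exists>E. complete_under n (Sigma_eqrel p) E \<and>
        \<not> complete_under (n + 1) (Sigma_eqrel p) E"
      by (simp add: Suc Sigma_eqrel_def[abs_def])
    moreover have "Pi0 (Suc q) (prod_encode ` diag_rel n (\<lambda>e. \<not> diag_collision n e))"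
      using Sigma0_mono[OF Pi1_diag_rel[of "\<lambda>e. \<not> diag_collision n e", unfolded Pi0_def], of "Suc q"]
        Sigma1_diag_collision
      by (simp add: Pi0_def)
    from Pi.strict_completeness[OF n _ this] have "\<exists>E. complete_under n (Pi_eqrel p) E \<and>
        \<not> complete_under (n + 1) (Pi_eqrel p) E"
      by (simp add: Suc Pi_eqrel_def[abs_def])
    ultimately show ?thesis ..
  qed
qed
end
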